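(* The type-independent absolute robustness $M_{\mathrm{abs}}$ is a type-independent LOSR monotone: for every nonsignaling resource $R$ (of arbitrary type and dimensions) and every LOSR-free transformation $\tau$ (possibly changing the type and dimensions of the resource), $M_{\mathrm{abs}}(\tau[R])\le M_{\mathrm{abs}}(R)$.
   Context: Systems have a dimension and a type in $\{\mathsf{I},\mathsf{C},\mathsf{Q}\}$ (trivial = dimension 1, classical, quantum). A bipartite resource with Alice's input/output $\mathcal{X},\mathcal{A}$ and Bob's input/output $\mathcal{Y},\mathcal{B}$ is a completely positive linear map from operators on $\mathcal{X}\otimes\mathcal{Y}$ to operators on $\mathcal{A}\otimes\mathcal{B}$, trace preserving on product inputs, nonsignaling in both directions, and with classicality constraints (classical output $\mathcal{A}$: $\langle i|R[\cdot]|j\rangle_{\mathcal{A}}=0$ for $i\neq j$; classical input $\mathcal{X}$: $R[|i\rangle\langle j|\otimes\psi]=0$ for $i\ne j$; similarly for Bob). It is LOSR-free if it equals $\sum_ip_iR^i_{\mathcal{A}|\mathcal{X}}\otimes R^i_{\mathcal{B}|\mathcal{Y}}$ with $(p_i)$ a probability distribution and single-party channels of the same types. $\mathbf{R}^{\mathrm{free}}$ denotes the set of LOSR-free resources of all types and dimensions. For a resource $R$, $M_{\mathrm{abs}}(R)=\min\{s\ge0:\ (R+sS)/(1+s)\in\mathbf{R}^{\mathrm{free}}\text{ for some LOSR-free }S\text{ with the same type and dimensions as }R\}$. An LOSR-free transformation is a map $\tau[R]=\sum_\lambda p_\lambda(\mathcal{E}^\lambda_{\mathcal{A}}\otimes\mathcal{E}^\lambda_{\mathcal{B}})\circ(R\otimes\mathrm{id}_{\mathcal{M}_A\mathcal{M}_B})\circ(\mathcal{P}^\lambda_{\mathcal{A}}\otimes\mathcal{P}^\lambda_{\mathcal{B}})$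 (a convex mixture of products of local supermaps: pre-processing channels $\mathcal{P}^\lambda_{\mathcal{A}}$ from a new input $\mathcal{X}'$ to $\mathcal{X}\otimes\mathcal{M}_A$ and post-processing channels $\mathcal{E}^\lambda_{\mathcal{A}}$ from $\mathcal{A}\otimes\mathcal{M}_A$ to a new output $\mathcal{A}'$, similarly for Bob), mapping resources of one type and dimension to resources of a (possibly different) type and dimension; it is linear and maps LOSR-free resources to LOSR-free resources. *)

theory Defs
  imports "Jordan_Normal_Form.Matrix" "Jordan_Normal_Form.Conjugate" "HOL-Library.Complex_Order"
    "HOL-Library.Extended_Real"
begin

text \<open>Operators on C^d are d x d complex matrices. Tensor factors are encoded
 in the usual lexicographic (Kronecker) index convention: index (i,k) of C^d1 (x) C^d2
 is i*d2+k.\<close>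

type_synonym cmap = "complex mat \<Rightarrow> complex mat"

definition kron :: "complex mat \<Rightarrow> complex mat \<Rightarrow> complex mat" where
  "kron A B = mat (dim_row A * dim_row B) (dim_col A * dim_col B)
     (\<lambda>(i,j). A $$ (i div dim_row B, j div dim_col B) * B $$ (i mod dim_row B, j mod dim_col B))"

definition emat :: "nat \<Rightarrow> nat \<Rightarrow> nat \<Rightarrow> complex mat" where
  "emat d i j = mat d d (\<lambda>(a,b). if a = i \<and> b = j then 1 else 0)"

definition msum :: "nat \<Rightarrow> nat \<Rightarrow> (nat \<Rightarrow> complex mat) \<Rightarrow> complex mat" where
  "msum n d f = mat d d (\<lambda>rc. \<Sum>l<n. f l $$ rc)"

definition trace :: "complex mat \<Rightarrow> complex" where
  "trace A = (\<Sum>i<dim_row A. A $$ (i,i))"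

definition psd :: "nat \<Rightarrow> complex mat \<Rightarrow> bool" where
  "psd n A \<longleftrightarrow> A \<in> carrier_mat n n \<and>
     (\<forall>v \<in> carrier_vec n. 0 \<le> conjugate v \<bullet> (A *\<^sub>v v))"

definition density :: "nat \<Rightarrow> complex mat \<Rightarrow> bool" where
  "density n A \<longleftrightarrow> psd n A \<and> trace A = 1"

definition ptrace_B :: "nat \<Rightarrow> nat \<Rightarrow> complex mat \<Rightarrow> complex mat" where
  "ptrace_B dA dB M = mat dA dA (\<lambda>(i,j). \<Sum>k<dB. M $$ (i*dB+k, j*dB+k))"

definition ptrace_A :: "nat \<Rightarrow> nat \<Rightarrow> complex mat \<Rightarrow> complex mat" where
  "ptrace_A dA dB M = mat dB dB (\<lambda>(k,l). \<Sum>i<dA. M $$ (i*dB+k, i*dB+l))"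

text \<open>Tensor product of linear maps Phi : L(C^a1) -> L(C^b1), Psi : L(C^a2) -> L(C^b2),
 defined on all of L(C^a1 (x) C^a2) by linear extension from matrix units.\<close>
definition map_tensor :: "nat \<Rightarrow> nat \<Rightarrow> nat \<Rightarrow> nat \<Rightarrow> cmap \<Rightarrow> cmap \<Rightarrow> cmap" where
  "map_tensor a1 a2 b1 b2 \<Phi> \<Psi> M = mat (b1*b2) (b1*b2) (\<lambda>rc.
     \<Sum>i<a1. \<Sum>j<a1. \<Sum>k<a2. \<Sum>l<a2.
       M $$ (i*a2+k, j*a2+l) * kron (\<Phi> (emat a1 i j)) (\<Psi> (emat a2 k l)) $$ rc)"

text \<open>Reordering of tensor factors: an operator on C^d1 (x) C^d2 (x) C^d3 (x) C^d4 is mapped to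
 the corresponding operator on C^d1 (x) C^d3 (x) C^d2 (x) C^d4 (conjugation by the swap of the
 two middle factors).\<close>
definition swap_idx :: "nat \<Rightarrow> nat \<Rightarrow> nat \<Rightarrow> nat \<Rightarrow> nat \<Rightarrow> nat" where
  "swap_idx d1 d2 d3 d4 r =
     (let x4 = r mod d4; x2 = (r div d4) mod d2; x3 = (r div (d4*d2)) mod d3;
          x1 = r div (d4*d2*d3) in ((x1*d2+x2)*d3+x3)*d4+x4)"

definition swap_mid :: "nat \<Rightarrow> nat \<Rightarrow> nat \<Rightarrow> nat \<Rightarrow> complex mat \<Rightarrow> complex mat" where
  "swap_mid d1 d2 d3 d4 M = mat (d1*d3*d2*d4) (d1*d3*d2*d4)
     (\<lambda>(r,c). M $$ (swap_idx d1 d2 d3 d4 r, swap_idx d1 d2 d3 d4 c))"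

definition lin_map :: "nat \<Rightarrow> nat \<Rightarrow> cmap \<Rightarrow> bool" where
  "lin_map din dout \<Phi> \<longleftrightarrow>
     (\<forall>M \<in> carrier_mat din din. \<Phi> M \<in> carrier_mat dout dout) \<and>
     (\<forall>M \<in> carrier_mat din din. \<forall>N \<in> carrier_mat din din. \<Phi> (M + N) = \<Phi> M + \<Phi> N) \<and>
     (\<forall>M \<in> carrier_mat din din. \<forall>c. \<Phi> (c \<cdot>\<^sub>m M) = c \<cdot>\<^sub>m \<Phi> M)"

text \<open>ampliation id_k (x) Phi (the C^k factor first)\<close>
definition ampl :: "nat \<Rightarrow> nat \<Rightarrow> nat \<Rightarrow> cmap \<Rightarrow> cmap" where
  "ampl k din dout \<Phi> M = mat (k*dout) (k*dout) (\<lambda>(r,c).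
     \<Phi> (mat din din (\<lambda>(i,j). M $$ ((r div dout)*din + i, (c div dout)*din + j)))
       $$ (r mod dout, c mod dout))"

definition compl_pos :: "nat \<Rightarrow> nat \<Rightarrow> cmap \<Rightarrow> bool" where
  "compl_pos din dout \<Phi> \<longleftrightarrow>
     (\<forall>k M. psd (k*din) M \<longrightarrow> psd (k*dout) (ampl k din dout \<Phi> M))"

definition trace_pres :: "nat \<Rightarrow> cmap \<Rightarrow> bool" where
  "trace_pres din \<Phi> \<longleftrightarrow> (\<forall>M \<in> carrier_mat din din. trace (\<Phi> M) = trace M)"

definition channel :: "nat \<Rightarrow> nat \<Rightarrow> cmap \<Rightarrow> bool" where
  "channel din dout \<Phi> \<longleftrightarrow> lin_map din dout \<Phi> \<and> compl_pos din dout \<Phi> \<and> trace_pres din \<Phi>"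

definition cl_output :: "nat \<Rightarrow> nat \<Rightarrow> cmap \<Rightarrow> bool" where
  "cl_output din dout \<Phi> \<longleftrightarrow> (\<forall>M \<in> carrier_mat din din. \<forall>i j.
     i < dout \<longrightarrow> j < dout \<longrightarrow> i \<noteq> j \<longrightarrow> \<Phi> M $$ (i,j) = 0)"

definition cl_input :: "nat \<Rightarrow> nat \<Rightarrow> cmap \<Rightarrow> bool" where
  "cl_input din dout \<Phi> \<longleftrightarrow> (\<forall>i j.
     i < din \<longrightarrow> j < din \<longrightarrow> i \<noteq> j \<longrightarrow> \<Phi> (emat din i j) = 0\<^sub>m dout dout)"

datatype stype = Triv | Cl | Qu

type_synonym sys = "stype \<times> nat"

definition valid_sys :: "sys \<Rightarrow> bool" where
  "valid_sys s \<longleftrightarrow> (if fst s = Triv then snd s = 1 else snd s \<ge> 1)"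

abbreviation dm :: "sys \<Rightarrow> nat" where "dm s \<equiv> snd s"
abbreviation is_cl :: "sys \<Rightarrow> bool" where "is_cl s \<equiv> fst s = Cl"

definition local_chan :: "sys \<Rightarrow> sys \<Rightarrow> cmap \<Rightarrow> bool" where
  "local_chan X A \<Phi> \<longleftrightarrow> valid_sys X \<and> valid_sys A \<and> channel (dm X) (dm A) \<Phi> \<and>
     (is_cl X \<longrightarrow> cl_input (dm X) (dm A) \<Phi>) \<and> (is_cl A \<longrightarrow> cl_output (dm X) (dm A) \<Phi>)"

datatype btype = BT (inX: sys) (outA: sys) (inY: sys) (outB: sys)

definition resource :: "btype \<Rightarrow> cmap \<Rightarrow> bool" where
  "resource T R \<longleftrightarrow>
    (let dX = dm (inX T); dA = dm (outA T); dY = dm (inY T); dB = dm (outB T) in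
     valid_sys (inX T) \<and> valid_sys (outA T) \<and> valid_sys (inY T) \<and> valid_sys (outB T) \<and>
     lin_map (dX*dY) (dA*dB) R \<and> compl_pos (dX*dY) (dA*dB) R \<and>
     (\<forall>\<rho> \<in> carrier_mat dX dX. \<forall>\<sigma> \<in> carrier_mat dY dY.
        trace (R (kron \<rho> \<sigma>)) = trace \<rho> * trace \<sigma>) \<and>
     (\<forall>\<rho> \<sigma> \<sigma>'. density dX \<rho> \<longrightarrow> density dY \<sigma> \<longrightarrow> density dY \<sigma>' \<longrightarrow>
        ptrace_B dA dB (R (kron \<rho> \<sigma>)) = ptrace_B dA dB (R (kron \<rho> \<sigma>'))) \<and>
     (\<forall>\<rho> \<rho>' \<sigma>. density dX \<rho> \<longrightarrow> density dX \<rho>' \<longrightarrow> density dY \<sigma> \<longrightarrow>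
        ptrace_A dA dB (R (kron \<rho> \<sigma>)) = ptrace_A dA dB (R (kron \<rho>' \<sigma>))) \<and>
     (is_cl (outA T) \<longrightarrow> (\<forall>M \<in> carrier_mat (dX*dY) (dX*dY). \<forall>i j k l.
        i < dA \<longrightarrow> j < dA \<longrightarrow> k < dB \<longrightarrow> l < dB \<longrightarrow> i \<noteq> j \<longrightarrow> R M $$ (i*dB+k, j*dB+l) = 0)) \<and>
     (is_cl (outB T) \<longrightarrow> (\<forall>M \<in> carrier_mat (dX*dY) (dX*dY). \<forall>i j k l.
        i < dA \<longrightarrow> j < dA \<longrightarrow> k < dB \<longrightarrow> l < dB \<longrightarrow> k \<noteq> l \<longrightarrow> R M $$ (i*dB+k, j*dB+l) = 0)) \<and>
     (is_cl (inX T) \<longrightarrow> (\<forall>i j. i < dX \<longrightarrow> j < dX \<longrightarrow> i \<noteq> j \<longrightarrow>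
        (\<forall>\<psi> \<in> carrier_mat dY dY. R (kron (emat dX i j) \<psi>) = 0\<^sub>m (dA*dB) (dA*dB)))) \<and>
     (is_cl (inY T) \<longrightarrow> (\<forall>k l. k < dY \<longrightarrow> l < dY \<longrightarrow> k \<noteq> l \<longrightarrow>
        (\<forall>\<psi> \<in> carrier_mat dX dX. R (kron \<psi> (emat dY k l)) = 0\<^sub>m (dA*dB) (dA*dB)))))"

definition losr_free :: "btype \<Rightarrow> cmap \<Rightarrow> bool" where
  "losr_free T R \<longleftrightarrow>
    (let dX = dm (inX T); dA = dm (outA T); dY = dm (inY T); dB = dm (outB T) in
     \<exists>(n::nat) (p::nat \<Rightarrow> real) RA RB.
       (\<forall>i<n. p i \<ge> 0) \<and> (\<Sum>i<n. p i) = 1 \<and>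
       (\<forall>i<n. local_chan (inX T) (outA T) (RA i) \<and> local_chan (inY T) (outB T) (RB i)) \<and>
       (\<forall>M \<in> carrier_mat (dX*dY) (dX*dY).
          R M = msum n (dA*dB) (\<lambda>i. complex_of_real (p i) \<cdot>\<^sub>m map_tensor dX dY dA dB (RA i) (RB i) M)))"

definition mix :: "real \<Rightarrow> cmap \<Rightarrow> cmap \<Rightarrow> cmap" where
  "mix s R S = (\<lambda>M. complex_of_real (1/(1+s)) \<cdot>\<^sub>m (R M + complex_of_real s \<cdot>\<^sub>m S M))"

text \<open>absolute robustness (infimum in the extended reals; it is a minimum whenever the set is
 nonempty and the infimum is attained, and equals \<infinity> if no admissible s exists)\<close>
definition M_abs :: "btype \<Rightarrow> cmap \<Rightarrow> ereal" where
  "M_abs T R = Inf {ereal s | s. s \<ge> 0 \<and> (\<exists>S. losr_free T S \<and> losr_free T (mix s R S))}"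

text \<open>Pre-processing P_A^l : X' -> X (x) M_A, post-processing E_A^l : A (x) M_A -> A'
 (memory M_A quantum of dimension mA), similarly for Bob; the local operations respect the
 classicality of the new input/output systems.\<close>
definition losr_trans :: "btype \<Rightarrow> btype \<Rightarrow> (cmap \<Rightarrow> cmap) \<Rightarrow> bool" where
  "losr_trans T T' \<tau> \<longleftrightarrow>
    (let dX = dm (inX T); dA = dm (outA T); dY = dm (inY T); dB = dm (outB T);
         dX' = dm (inX T'); dA' = dm (outA T'); dY' = dm (inY T'); dB' = dm (outB T') in
     valid_sys (inX T') \<and> valid_sys (outA T') \<and> valid_sys (inY T') \<and> valid_sys (outB T') \<and>
     (\<exists>(n::nat) (p::nat \<Rightarrow> real) (mA::nat) (mB::nat) PA PB EA EB.
       mA \<ge> 1 \<and> mB \<ge> 1 \<and>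
       (\<forall>l<n. p l \<ge> 0) \<and> (\<Sum>l<n. p l) = 1 \<and>
       (\<forall>l<n. channel dX' (dX*mA) (PA l) \<and> (is_cl (inX T') \<longrightarrow> cl_input dX' (dX*mA) (PA l)) \<and>
              channel dY' (dY*mB) (PB l) \<and> (is_cl (inY T') \<longrightarrow> cl_input dY' (dY*mB) (PB l)) \<and>
              channel (dA*mA) dA' (EA l) \<and> (is_cl (outA T') \<longrightarrow> cl_output (dA*mA) dA' (EA l)) \<and>
              channel (dB*mB) dB' (EB l) \<and> (is_cl (outB T') \<longrightarrow> cl_output (dB*mB) dB' (EB l))) \<and>
       (\<forall>R. \<forall>M \<in> carrier_mat (dX'*dY') (dX'*dY').
          \<tau> R M = msum n (dA'*dB') (\<lambda>l. complex_of_real (p l) \<cdot>\<^sub>m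
            map_tensor (dA*mA) (dB*mB) dA' dB' (EA l) (EB l)
             (swap_mid dA dB mA mB
               (map_tensor (dX*dY) (mA*mB) (dA*dB) (mA*mB) R (\<lambda>N. N)
                 (swap_mid dX mA dY mB
                   (map_tensor dX' dY' (dX*mA) (dY*mB) (PA l) (PB l) M))))))))"

end

theory Submission
  imports Defs
begin

text \<open>If \<open>S\<close> and \<open>(R + s S)/(1 + s)\<close> are LOSR-free, then so are \<open>\<tau>[S]\<close> and
  \<open>\<tau>[(R + s S)/(1 + s)] = (\<tau>[R] + s \<tau>[S])/(1 + s)\<close>: the transformation is linear in the
  resource, and it maps LOSR-free resources to LOSR-free ones. Hence every \<open>s\<close> admissible for \<open>R\<close>
  is admissible for \<open>\<tau>[R]\<close>. The second fact holds branch by branch: local pre- and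
  post-processing wired around a product \<open>R\<^sub>A \<otimes> R\<^sub>B\<close> yields the product of
  \<open>E\<^sub>A \<circ> (R\<^sub>A \<otimes> id) \<circ> P\<^sub>A\<close> and \<open>E\<^sub>B \<circ> (R\<^sub>B \<otimes> id) \<circ> P\<^sub>B\<close>, and these are again local
  channels because \<open>R \<otimes> id\<close> is the ampliation \<open>id \<otimes> R\<close> conjugated by the swap of tensor
  factors, hence completely positive.\<close>

section \<open>Index arithmetic and elementary matrices\<close>

lemma sum_lessThan_mult:
  fixes f :: "nat \<Rightarrow> 'a::comm_monoid_add"
  shows "(\<Sum>r<a*b. f r) = (\<Sum>i<a. \<Sum>j<b. f (i*b+j))"
proof -
  have "(\<Sum>r<a*b. f r) = (\<Sum>i<a. sum f {i*b..<i*b+b})"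
    by (simp add: sum.nat_group)
  also have "\<dots> = (\<Sum>i<a. \<Sum>j<b. f (i*b+j))"
    by (rule sum.cong[OF refl])
      (simp add: sum.shift_bounds_nat_ivl[where k="i*b" and m=0 for i, simplified]
         atLeast0LessThan add.commute)
  finally show ?thesis .
qed

lemma mult_index_less: "i < a \<Longrightarrow> k < b \<Longrightarrow> i*b+k < a*(b::nat)"
proof -
  assume "i < a" "k < b"
  then have "i*b + k < (i+1)*b" by simp
  also have "\<dots> \<le> a*b" using \<open>i < a\<close> by (intro mult_right_mono) auto
  finally show ?thesis .
qed

lemma div_less_of_less_mult: "r < a*(b::nat) \<Longrightarrow> r div b < a"
  by (simp add: less_mult_imp_div_less)

lemma mod_less_of_less_mult: "r < a*(b::nat) \<Longrightarrow> r mod b < b"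
  by (cases "b = 0") auto

lemma eq_mat_carrierI:
  assumes "A \<in> carrier_mat n n" "B \<in> carrier_mat n n"
    and "\<And>i j. i < n \<Longrightarrow> j < n \<Longrightarrow> A $$ (i,j) = B $$ (i,j)"
  shows "A = B"
  using assms by (intro eq_matI) auto

lemma dim_kron[simp]:
  "dim_row (kron A B) = dim_row A * dim_row B" "dim_col (kron A B) = dim_col A * dim_col B"
  by (simp_all add: kron_def)

lemma kron_carrier_mat[simp]:
  "A \<in> carrier_mat a a \<Longrightarrow> B \<in> carrier_mat b b \<Longrightarrow> kron A B \<in> carrier_mat (a*b) (a*b)"
  unfolding carrier_mat_def by simp

lemma index_kron:
  "A \<in> carrier_mat a a \<Longrightarrow> B \<in> carrier_mat b b \<Longrightarrow> r < a*b \<Longrightarrow> c < a*b \<Longrightarrow>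
   kron A B $$ (r,c) = A $$ (r div b, c div b) * B $$ (r mod b, c mod b)"
  unfolding carrier_mat_def kron_def by auto

lemma index_kron_mult[simp]:
  "A \<in> carrier_mat a a \<Longrightarrow> B \<in> carrier_mat b b \<Longrightarrow> i < a \<Longrightarrow> j < a \<Longrightarrow> k < b \<Longrightarrow> l < b \<Longrightarrow>
   kron A B $$ (i*b+k, j*b+l) = A $$ (i,j) * B $$ (k,l)"
  by (simp add: index_kron mult_index_less)

lemma emat_carrier_mat[simp]: "emat d i j \<in> carrier_mat d d"
  by (simp add: emat_def)

lemma dim_emat[simp]: "dim_row (emat d i j) = d" "dim_col (emat d i j) = d"
  by (simp_all add: emat_def)

lemma index_emat[simp]:
  "r < d \<Longrightarrow> c < d \<Longrightarrow> emat d i j $$ (r,c) = (if r = i \<and> c = j then 1 else 0)"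
  by (simp add: emat_def)

lemma emat_mult_eq_kron:
  assumes "a < d1*d2" "b < d1*d2"
  shows "emat (d1*d2) a b = kron (emat d1 (a div d2) (b div d2)) (emat d2 (a mod d2) (b mod d2))"
proof (rule eq_mat_carrierI[of _ "d1*d2"])
  fix r c assume rc: "r < d1*d2" "c < d1*d2"
  have "r = a \<longleftrightarrow> r div d2 = a div d2 \<and> r mod d2 = a mod d2"
    "c = b \<longleftrightarrow> c div d2 = b div d2 \<and> c mod d2 = b mod d2"
    by (metis div_mult_mod_eq)+
  with rc show "emat (d1*d2) a b $$ (r,c) =
      kron (emat d1 (a div d2) (b div d2)) (emat d2 (a mod d2) (b mod d2)) $$ (r,c)"
    by (simp add: index_kron[OF emat_carrier_mat emat_carrier_mat]
        div_less_of_less_mult mod_less_of_less_mult)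
qed simp_all

lemma msum_carrier_mat[simp]: "msum n d f \<in> carrier_mat d d"
  by (simp add: msum_def)

lemma dim_msum[simp]: "dim_row (msum n d f) = d" "dim_col (msum n d f) = d"
  by (simp_all add: msum_def)

lemma index_msum[simp]: "r < d \<Longrightarrow> c < d \<Longrightarrow> msum n d f $$ (r,c) = (\<Sum>l<n. f l $$ (r,c))"
  by (simp add: msum_def)

lemma msum_cong: "(\<And>l. l < n \<Longrightarrow> f l = g l) \<Longrightarrow> msum n d f = msum n d g"
  unfolding msum_def by (auto intro!: eq_matI sum.cong)

lemma msum_Suc: "f n \<in> carrier_mat d d \<Longrightarrow> msum (Suc n) d f = msum n d f + f n"
  by (intro eq_matI) auto

lemma msum_zero[simp]: "msum 0 d f = 0\<^sub>m d d"
  by (auto simp: msum_def)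

lemma msum_msum:
  assumes "\<And>l i. l < n' \<Longrightarrow> i < n \<Longrightarrow> G l i \<in> carrier_mat d d"
  shows "msum n' d (\<lambda>l. complex_of_real (p' l) \<cdot>\<^sub>m msum n d (\<lambda>i. complex_of_real (p i) \<cdot>\<^sub>m G l i)) =
         msum (n'*n) d (\<lambda>k. complex_of_real (p' (k div n) * p (k mod n)) \<cdot>\<^sub>m G (k div n) (k mod n))"
proof (rule eq_mat_carrierI[OF msum_carrier_mat msum_carrier_mat])
  have "dim_row (G l i) = d" "dim_col (G l i) = d" if "l < n'" "i < n" for l i
    using assms[OF that] by auto
  then show "msum n' d (\<lambda>l. complex_of_real (p' l) \<cdot>\<^sub>m msum n d (\<lambda>i. complex_of_real (p i) \<cdot>\<^sub>m G l i)) $$ (r,c) =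
      msum (n'*n) d (\<lambda>k. complex_of_real (p' (k div n) * p (k mod n)) \<cdot>\<^sub>m G (k div n) (k mod n)) $$ (r,c)"
    if "r < d" "c < d" for r c
    using that by (simp add: sum_lessThan_mult sum_distrib_left mult.assoc)
qed

lemma product_weights:
  fixes p p' :: "nat \<Rightarrow> real"
  assumes "\<forall>l<n'. p' l \<ge> 0" "(\<Sum>l<n'. p' l) = 1" "\<forall>i<n. p i \<ge> 0" "(\<Sum>i<n. p i) = 1"
  shows "\<forall>k<n'*n. p' (k div n) * p (k mod n) \<ge> 0" "(\<Sum>k<n'*n. p' (k div n) * p (k mod n)) = 1"
proof -
  show "\<forall>k<n'*n. p' (k div n) * p (k mod n) \<ge> 0"
  proof (intro allI impI mult_nonneg_nonneg)
    fix k assume "k < n'*n"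
    then have "k div n < n'" "k mod n < n"
      by (simp_all add: div_less_of_less_mult mod_less_of_less_mult)
    with assms(1,3) show "p' (k div n) \<ge> 0" "p (k mod n) \<ge> 0" by simp_all
  qed
  show "(\<Sum>k<n'*n. p' (k div n) * p (k mod n)) = 1"
    using assms(2,4) by (simp add: sum_lessThan_mult sum_distrib_left[symmetric] sum_distrib_right[symmetric])
qed

lemma mat_eq_msum_emat:
  assumes "M \<in> carrier_mat n n"
  shows "M = msum (n*n) n (\<lambda>k. M $$ (k div n, k mod n) \<cdot>\<^sub>m emat n (k div n) (k mod n))"
proof (rule eq_mat_carrierI[OF assms msum_carrier_mat])
  fix r c assume rc: "r < n" "c < n"
  have "msum (n*n) n (\<lambda>k. M $$ (k div n, k mod n) \<cdot>\<^sub>m emat n (k div n) (k mod n)) $$ (r,c)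
     = (\<Sum>i<n. \<Sum>j<n. M $$ (i,j) * (if r = i \<and> c = j then 1 else 0))"
    using rc by (simp add: sum_lessThan_mult)
  also have "\<dots> = (\<Sum>i<n. if r = i then M $$ (r,c) else 0)"
    using rc by (intro sum.cong) (auto simp: sum.delta' if_distrib[of "\<lambda>x. _ * x"] cong: if_cong)
  also have "\<dots> = M $$ (r,c)"
    using rc by (simp add: sum.delta)
  finally show "M $$ (r,c) = msum (n*n) n (\<lambda>k. M $$ (k div n, k mod n) \<cdot>\<^sub>m emat n (k div n) (k mod n)) $$ (r,c)"
    by simp
qed

section \<open>Linear maps on operator spaces\<close>

lemma lin_mapD:
  assumes "lin_map n m F"
  shows "M \<in> carrier_mat n n \<Longrightarrow> F M \<in> carrier_mat m m"
    and "M \<in> carrier_mat n n \<Longrightarrow> N \<in> carrier_mat n n \<Longrightarrow> F (M + N) = F M + F N"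
    and "M \<in> carrier_mat n n \<Longrightarrow> F (c \<cdot>\<^sub>m M) = c \<cdot>\<^sub>m F M"
  using assms by (auto simp: lin_map_def)

lemma lin_map_zero:
  assumes "lin_map n m F"
  shows "F (0\<^sub>m n n) = 0\<^sub>m m m"
proof -
  have "F (0\<^sub>m n n) = F (0 \<cdot>\<^sub>m 0\<^sub>m n n)" by simp
  also have "\<dots> = 0 \<cdot>\<^sub>m F (0\<^sub>m n n)" using lin_mapD(3)[OF assms, of "0\<^sub>m n n" 0] by simp
  also have "\<dots> = 0\<^sub>m m m" using lin_mapD(1)[OF assms, of "0\<^sub>m n n"] by auto
  finally show ?thesis .
qed

lemma lin_map_id: "lin_map n n (\<lambda>N. N)"
  by (simp add: lin_map_def)

lemma lin_map_comp: "lin_map a b F \<Longrightarrow> lin_map b c G \<Longrightarrow> lin_map a c (\<lambda>M. G (F M))"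
  unfolding lin_map_def by auto

lemma lin_map_msum:
  assumes "lin_map n m F" "\<And>i. i < N \<Longrightarrow> f i \<in> carrier_mat n n"
  shows "F (msum N n (\<lambda>i. c i \<cdot>\<^sub>m f i)) = msum N m (\<lambda>i. c i \<cdot>\<^sub>m F (f i))"
  using assms(2)
proof (induction N)
  case 0
  then show ?case using lin_map_zero[OF assms(1)] by simp
next
  case (Suc N)
  then have fN: "f N \<in> carrier_mat n n" by simp
  have "F (msum (Suc N) n (\<lambda>i. c i \<cdot>\<^sub>m f i)) = F (msum N n (\<lambda>i. c i \<cdot>\<^sub>m f i) + c N \<cdot>\<^sub>m f N)"
    using fN by (simp add: msum_Suc)
  also have "\<dots> = msum N m (\<lambda>i. c i \<cdot>\<^sub>m F (f i)) + c N \<cdot>\<^sub>m F (f N)"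
    using Suc fN lin_mapD[OF assms(1)] by simp
  also have "\<dots> = msum (Suc N) m (\<lambda>i. c i \<cdot>\<^sub>m F (f i))"
    using fN lin_mapD(1)[OF assms(1)] by (simp add: msum_Suc)
  finally show ?case .
qed

lemma lin_map_expand:
  assumes "lin_map n m F" "M \<in> carrier_mat n n" "r < m" "c < m"
  shows "F M $$ (r,c) = (\<Sum>i<n. \<Sum>j<n. M $$ (i,j) * F (emat n i j) $$ (r,c))"
proof -
  have "dim_row (F (emat n i j)) = m" "dim_col (F (emat n i j)) = m" for i j
    using lin_mapD(1)[OF assms(1), of "emat n i j"] by auto
  moreover have "F M = msum (n*n) m (\<lambda>k. M $$ (k div n, k mod n) \<cdot>\<^sub>m F (emat n (k div n) (k mod n)))"
    by (subst mat_eq_msum_emat[OF assms(2)], subst lin_map_msum[OF assms(1)]) auto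
  ultimately show ?thesis
    using assms(3,4) by (simp add: sum_lessThan_mult)
qed

lemma lin_map_eqI:
  assumes "lin_map n m F" "lin_map n m G"
    and "\<And>i j. i < n \<Longrightarrow> j < n \<Longrightarrow> F (emat n i j) = G (emat n i j)"
    and "M \<in> carrier_mat n n"
  shows "F M = G M"
proof (rule eq_matI)
  have FM: "F M \<in> carrier_mat m m" and GM: "G M \<in> carrier_mat m m"
    using lin_mapD(1) assms(1,2,4) by blast+
  then show "dim_row (F M) = dim_row (G M)" "dim_col (F M) = dim_col (G M)" by auto
  fix r c assume "r < dim_row (G M)" "c < dim_col (G M)"
  with GM show "F M $$ (r,c) = G M $$ (r,c)"
    using lin_map_expand[OF assms(1) assms(4)] lin_map_expand[OF assms(2) assms(4)] assms(3) by simp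
qed

lemma lin_map_eqI_kron:
  assumes "lin_map (d1*d2) m F" "lin_map (d1*d2) m G"
    and "\<And>i j k l. i < d1 \<Longrightarrow> j < d1 \<Longrightarrow> k < d2 \<Longrightarrow> l < d2 \<Longrightarrow>
           F (kron (emat d1 i j) (emat d2 k l)) = G (kron (emat d1 i j) (emat d2 k l))"
    and "M \<in> carrier_mat (d1*d2) (d1*d2)"
  shows "F M = G M"
  using assms by (intro lin_map_eqI[OF assms(1,2) _ assms(4)])
    (simp add: emat_mult_eq_kron div_less_of_less_mult mod_less_of_less_mult)

section \<open>Tensor products of maps and reordering of tensor factors\<close>

lemma map_tensor_carrier_mat[simp]: "map_tensor a1 a2 b1 b2 \<Phi> \<Psi> M \<in> carrier_mat (b1*b2) (b1*b2)"
  by (simp add: map_tensor_def)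

lemma lin_map_map_tensor: "lin_map (a1*a2) (b1*b2) (map_tensor a1 a2 b1 b2 \<Phi> \<Psi>)"
  unfolding lin_map_def
proof (intro conjI ballI allI)
  fix M N :: "complex mat"
  assume "M \<in> carrier_mat (a1*a2) (a1*a2)" "N \<in> carrier_mat (a1*a2) (a1*a2)"
  then show "map_tensor a1 a2 b1 b2 \<Phi> \<Psi> (M + N) = map_tensor a1 a2 b1 b2 \<Phi> \<Psi> M + map_tensor a1 a2 b1 b2 \<Phi> \<Psi> N"
    unfolding map_tensor_def
    by (intro eq_matI) (auto simp: mult_index_less distrib_right sum.distrib intro!: sum.cong)
next
  fix M :: "complex mat" and c
  assume "M \<in> carrier_mat (a1*a2) (a1*a2)"
  then show "map_tensor a1 a2 b1 b2 \<Phi> \<Psi> (c \<cdot>\<^sub>m M) = c \<cdot>\<^sub>m map_tensor a1 a2 b1 b2 \<Phi> \<Psi> M"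
    unfolding map_tensor_def
    by (intro eq_matI) (auto simp: mult_index_less sum_distrib_left mult.assoc intro!: sum.cong)
qed simp

lemma map_tensor_kron:
  assumes "lin_map a1 b1 \<Phi>" "lin_map a2 b2 \<Psi>" "A \<in> carrier_mat a1 a1" "B \<in> carrier_mat a2 a2"
  shows "map_tensor a1 a2 b1 b2 \<Phi> \<Psi> (kron A B) = kron (\<Phi> A) (\<Psi> B)"
proof -
  have \<Phi>A: "\<Phi> A \<in> carrier_mat b1 b1" and \<Psi>B: "\<Psi> B \<in> carrier_mat b2 b2"
    using lin_mapD(1) assms by auto
  have \<Phi>\<Psi>e: "\<Phi> (emat a1 i j) \<in> carrier_mat b1 b1" "\<Psi> (emat a2 k l) \<in> carrier_mat b2 b2" for i j k l
    using lin_mapD(1) assms by auto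
  show ?thesis
  proof (rule eq_mat_carrierI[OF map_tensor_carrier_mat kron_carrier_mat[OF \<Phi>A \<Psi>B]])
    fix r c assume rc: "r < b1*b2" "c < b1*b2"
    have "map_tensor a1 a2 b1 b2 \<Phi> \<Psi> (kron A B) $$ (r,c) =
       (\<Sum>i<a1. \<Sum>j<a1. \<Sum>k<a2. \<Sum>l<a2. (A $$ (i,j) * \<Phi> (emat a1 i j) $$ (r div b2, c div b2)) *
          (B $$ (k,l) * \<Psi> (emat a2 k l) $$ (r mod b2, c mod b2)))"
      unfolding map_tensor_def using rc assms(3,4)
      by (auto simp: index_kron[OF \<Phi>\<Psi>e] mult_ac intro!: sum.cong)
    also have "\<dots> = (\<Sum>i<a1. \<Sum>j<a1. A $$ (i,j) * \<Phi> (emat a1 i j) $$ (r div b2, c div b2)) *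
          (\<Sum>k<a2. \<Sum>l<a2. B $$ (k,l) * \<Psi> (emat a2 k l) $$ (r mod b2, c mod b2))"
      by (simp only: sum_distrib_right, simp only: sum_distrib_left)
    also have "\<dots> = kron (\<Phi> A) (\<Psi> B) $$ (r,c)"
      using rc \<Phi>A \<Psi>B
      by (simp add: index_kron lin_map_expand[OF assms(1) assms(3)] lin_map_expand[OF assms(2) assms(4)]
          div_less_of_less_mult mod_less_of_less_mult)
    finally show "map_tensor a1 a2 b1 b2 \<Phi> \<Psi> (kron A B) $$ (r,c) = kron (\<Phi> A) (\<Psi> B) $$ (r,c)" .
  qed
qed

lemma map_tensor_comp:
  assumes "lin_map a1 b1 \<Phi>" "lin_map a2 b2 \<Psi>" "lin_map b1 c1 \<Phi>'" "lin_map b2 c2 \<Psi>'"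
    and "M \<in> carrier_mat (a1*a2) (a1*a2)"
  shows "map_tensor b1 b2 c1 c2 \<Phi>' \<Psi>' (map_tensor a1 a2 b1 b2 \<Phi> \<Psi> M) =
         map_tensor a1 a2 c1 c2 (\<lambda>N. \<Phi>' (\<Phi> N)) (\<lambda>N. \<Psi>' (\<Psi> N)) M"
proof (rule lin_map_eqI_kron[OF _ _ _ assms(5)])
  show "lin_map (a1*a2) (c1*c2) (\<lambda>M. map_tensor b1 b2 c1 c2 \<Phi>' \<Psi>' (map_tensor a1 a2 b1 b2 \<Phi> \<Psi> M))"
    by (rule lin_map_comp[OF lin_map_map_tensor lin_map_map_tensor])
  show "lin_map (a1*a2) (c1*c2) (map_tensor a1 a2 c1 c2 (\<lambda>N. \<Phi>' (\<Phi> N)) (\<lambda>N. \<Psi>' (\<Psi> N)))"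
    by (rule lin_map_map_tensor)
  fix i j k l
  show "map_tensor b1 b2 c1 c2 \<Phi>' \<Psi>' (map_tensor a1 a2 b1 b2 \<Phi> \<Psi> (kron (emat a1 i j) (emat a2 k l))) =
        map_tensor a1 a2 c1 c2 (\<lambda>N. \<Phi>' (\<Phi> N)) (\<lambda>N. \<Psi>' (\<Psi> N)) (kron (emat a1 i j) (emat a2 k l))"
    using assms(1-4)
    by (simp add: map_tensor_kron lin_map_comp lin_mapD(1)[OF assms(1)] lin_mapD(1)[OF assms(2)])
qed

lemma map_tensor_msum_left:
  assumes "\<And>M. M \<in> carrier_mat a1 a1 \<Longrightarrow> \<Phi> M = msum n b1 (\<lambda>i. q i \<cdot>\<^sub>m F i M)"
    and "\<And>i M. M \<in> carrier_mat a1 a1 \<Longrightarrow> F i M \<in> carrier_mat b1 b1"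
    and "\<And>M. M \<in> carrier_mat a2 a2 \<Longrightarrow> \<Psi> M \<in> carrier_mat b2 b2"
  shows "map_tensor a1 a2 b1 b2 \<Phi> \<Psi> X = msum n (b1*b2) (\<lambda>i. q i \<cdot>\<^sub>m map_tensor a1 a2 b1 b2 (F i) \<Psi> X)"
proof (rule eq_mat_carrierI[OF map_tensor_carrier_mat msum_carrier_mat])
  fix r c assume rc: "r < b1*b2" "c < b1*b2"
  have \<Psi>e: "\<Psi> (emat a2 k l) \<in> carrier_mat b2 b2" for k l using assms(3) by auto
  have Fe: "F i (emat a1 k l) \<in> carrier_mat b1 b1" for i k l using assms(2) by auto
  then have Fe_dim: "dim_row (F i (emat a1 k l)) = b1" "dim_col (F i (emat a1 k l)) = b1" for i k l
    by auto
  have "map_tensor a1 a2 b1 b2 \<Phi> \<Psi> X $$ (r,c) =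
    (\<Sum>i<a1. \<Sum>j<a1. \<Sum>k<a2. \<Sum>l<a2. X $$ (i*a2+k, j*a2+l) *
       ((\<Sum>m<n. q m * F m (emat a1 i j) $$ (r div b2, c div b2)) * \<Psi> (emat a2 k l) $$ (r mod b2, c mod b2)))"
    unfolding map_tensor_def using rc
    by (auto simp: index_kron[OF msum_carrier_mat \<Psi>e] assms(1) div_less_of_less_mult
        mod_less_of_less_mult Fe_dim intro!: sum.cong)
  also have "\<dots> = (\<Sum>m<n. q m * (\<Sum>i<a1. \<Sum>j<a1. \<Sum>k<a2. \<Sum>l<a2. X $$ (i*a2+k, j*a2+l) *
       (F m (emat a1 i j) $$ (r div b2, c div b2) * \<Psi> (emat a2 k l) $$ (r mod b2, c mod b2))))"
    by (simp add: sum_distrib_left sum_distrib_right mult_ac sum.swap[of _ "{..<n}"])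
  also have "\<dots> = msum n (b1*b2) (\<lambda>i. q i \<cdot>\<^sub>m map_tensor a1 a2 b1 b2 (F i) \<Psi> X) $$ (r,c)"
    unfolding map_tensor_def using rc
    by (auto simp: index_kron[OF Fe \<Psi>e] intro!: sum.cong)
  finally show "map_tensor a1 a2 b1 b2 \<Phi> \<Psi> X $$ (r,c) =
      msum n (b1*b2) (\<lambda>i. q i \<cdot>\<^sub>m map_tensor a1 a2 b1 b2 (F i) \<Psi> X) $$ (r,c)" .
qed

lemma less_four_factors_decompose:
  assumes "r < d1*d3*d2*(d4::nat)"
  obtains x1 x2 x3 x4 where "x1 < d1" "x2 < d2" "x3 < d3" "x4 < d4" "r = ((x1*d3+x3)*d2+x2)*d4+x4"
proof
  have pos: "d2 > 0" "d3 > 0" "d4 > 0" using assms by (auto intro!: gr0I)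
  show "r div d4 div d2 div d3 < d1"
    using assms by (simp add: div_less_of_less_mult)
  show "r div d4 mod d2 < d2" "r div d4 div d2 mod d3 < d3" "r mod d4 < d4"
    using pos by auto
  show "r = ((r div d4 div d2 div d3 * d3 + r div d4 div d2 mod d3) * d2 + r div d4 mod d2) * d4 + r mod d4"
    by simp
qed

lemma swap_idx_eq:
  assumes "x2 < d2" "x3 < d3" "x4 < (d4::nat)"
  shows "swap_idx d1 d2 d3 d4 (((x1*d3+x3)*d2+x2)*d4+x4) = ((x1*d2+x2)*d3+x3)*d4+x4"
proof -
  let ?r = "((x1*d3+x3)*d2+x2)*d4+x4"
  have a: "?r mod d4 = x4" "?r div d4 = (x1*d3+x3)*d2+x2" using assms by simp_all
  have b: "?r div (d4*d2) = x1*d3+x3" using a assms by (simp add: div_mult2_eq)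
  have c: "?r div (d4*d2*d3) = x1" using b assms by (simp add: div_mult2_eq[of ?r "d4*d2" d3])
  show ?thesis unfolding swap_idx_def Let_def using a b c assms by simp
qed

lemma swap_idx_less:
  assumes "r < d1*d3*d2*d4"
  shows "swap_idx d1 d2 d3 d4 r < d1*d2*d3*d4"
  using assms by (elim less_four_factors_decompose) (simp add: swap_idx_eq mult_index_less)

lemma swap_mid_carrier_mat[simp]: "swap_mid d1 d2 d3 d4 M \<in> carrier_mat (d1*d3*(d2*d4)) (d1*d3*(d2*d4))"
  by (simp add: swap_mid_def mult.assoc)

lemma lin_map_swap_mid: "lin_map (d1*d2*(d3*d4)) (d1*d3*(d2*d4)) (swap_mid d1 d2 d3 d4)"
  unfolding lin_map_def swap_mid_def
  by (auto intro!: eq_matI simp: swap_idx_less mult.assoc[symmetric])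

lemma swap_mid_kron:
  assumes "A \<in> carrier_mat d1 d1" "B \<in> carrier_mat d2 d2" "C \<in> carrier_mat d3 d3" "D \<in> carrier_mat d4 d4"
  shows "swap_mid d1 d2 d3 d4 (kron (kron A B) (kron C D)) = kron (kron A C) (kron B D)"
proof (rule eq_mat_carrierI[OF swap_mid_carrier_mat])
  show "kron (kron A C) (kron B D) \<in> carrier_mat (d1*d3*(d2*d4)) (d1*d3*(d2*d4))"
    using assms by simp
  have split_AB: "((x1*d2+x2)*d3+x3)*d4+x4 = (x1*d2+x2)*(d3*d4) + (x3*d4+x4)" for x1 x2 x3 x4
    by (simp add: algebra_simps)
  have split_AC: "((x1*d3+x3)*d2+x2)*d4+x4 = (x1*d3+x3)*(d2*d4) + (x2*d4+x4)" for x1 x2 x3 x4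
    by (simp add: algebra_simps)
  fix r c assume "r < d1*d3*(d2*d4)" "c < d1*d3*(d2*d4)"
  then have "r < d1*d3*d2*d4" "c < d1*d3*d2*d4" by (simp_all add: mult.assoc)
  then obtain x1 x2 x3 x4 y1 y2 y3 y4
    where x: "x1 < d1" "x2 < d2" "x3 < d3" "x4 < d4" "r = ((x1*d3+x3)*d2+x2)*d4+x4"
      and y: "y1 < d1" "y2 < d2" "y3 < d3" "y4 < d4" "c = ((y1*d3+y3)*d2+y2)*d4+y4"
    by (metis less_four_factors_decompose)
  have "swap_mid d1 d2 d3 d4 (kron (kron A B) (kron C D)) $$ (r,c) =
      kron (kron A B) (kron C D) $$ ((x1*d2+x2)*(d3*d4) + (x3*d4+x4), (y1*d2+y2)*(d3*d4) + (y3*d4+y4))"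
    unfolding swap_mid_def using x y by (simp add: swap_idx_eq split_AB mult_index_less)
  also have "\<dots> = A $$ (x1,y1) * B $$ (x2,y2) * (C $$ (x3,y3) * D $$ (x4,y4))"
    using x y assms by (simp add: index_kron_mult[of _ "d1*d2" _ "d3*d4"] mult_index_less)
  also have "\<dots> = kron (kron A C) (kron B D) $$ (r,c)"
    unfolding x(5) y(5) split_AC
    using x y assms by (simp add: index_kron_mult[of _ "d1*d3" _ "d2*d4"] mult_index_less)
  finally show "swap_mid d1 d2 d3 d4 (kron (kron A B) (kron C D)) $$ (r,c) = kron (kron A C) (kron B D) $$ (r,c)" .
qed

section \<open>Channels\<close>

text \<open>For a permutation \<open>\<sigma>\<close> of \<open>{..<N}\<close>, \<open>reindex_mat N \<sigma>\<close> is conjugation by the corresponding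
  permutation matrix.\<close>

definition reindex_mat :: "nat \<Rightarrow> (nat \<Rightarrow> nat) \<Rightarrow> complex mat \<Rightarrow> complex mat" where
  "reindex_mat N \<sigma> M = mat N N (\<lambda>(r,c). M $$ (\<sigma> r, \<sigma> c))"

lemma reindex_mat_carrier_mat[simp]: "reindex_mat N \<sigma> M \<in> carrier_mat N N"
  by (simp add: reindex_mat_def)

lemma dim_reindex_mat[simp]: "dim_row (reindex_mat N \<sigma> M) = N" "dim_col (reindex_mat N \<sigma> M) = N"
  by (simp_all add: reindex_mat_def)

lemma quadratic_form_eq_sum:
  assumes "A \<in> carrier_mat n n" "v \<in> carrier_vec n"
  shows "conjugate v \<bullet> (A *\<^sub>v v) = (\<Sum>i<n. conjugate (v $ i) * (\<Sum>j<n. A $$ (i,j) * v $ j))"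
  using assms by (simp add: scalar_prod_def mult_mat_vec_def row_def atLeast0LessThan mult.commute)

lemma psd_reindex_mat:
  assumes bij: "bij_betw \<sigma> {..<N} {..<N}" and "psd N M"
  shows "psd N (reindex_mat N \<sigma> M)"
  unfolding psd_def
proof (intro conjI ballI)
  show "reindex_mat N \<sigma> M \<in> carrier_mat N N" by simp
  fix v :: "complex vec" assume v: "v \<in> carrier_vec N"
  have M: "M \<in> carrier_mat N N" using assms(2) by (simp add: psd_def)
  have \<sigma>_less: "\<sigma> r < N" if "r < N" for r using bij that by (auto dest: bij_betwE)
  define w where "w = vec N (\<lambda>a. v $ inv_into {..<N} \<sigma> a)"
  have w: "w \<in> carrier_vec N" by (simp add: w_def)
  have w_\<sigma>: "w $ \<sigma> r = v $ r" if "r < N" for r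
    using that \<sigma>_less bij by (simp add: w_def bij_betw_inv_into_left)
  have "0 \<le> conjugate w \<bullet> (M *\<^sub>v w)" using assms(2) w by (simp add: psd_def)
  also have "\<dots> = (\<Sum>a<N. conjugate (w $ a) * (\<Sum>b<N. M $$ (a,b) * w $ b))"
    by (rule quadratic_form_eq_sum[OF M w])
  also have "\<dots> = (\<Sum>r<N. conjugate (w $ \<sigma> r) * (\<Sum>c<N. M $$ (\<sigma> r, \<sigma> c) * w $ \<sigma> c))"
    using sum.reindex_bij_betw[OF bij, symmetric]
    by (simp add: sum.reindex_bij_betw[OF bij, of "\<lambda>b. M $$ (_, b) * w $ b", symmetric])
  also have "\<dots> = (\<Sum>r<N. conjugate (v $ r) * (\<Sum>c<N. reindex_mat N \<sigma> M $$ (r, c) * v $ c))"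
    by (auto simp: w_\<sigma> reindex_mat_def intro!: sum.cong)
  also have "\<dots> = conjugate v \<bullet> (reindex_mat N \<sigma> M *\<^sub>v v)"
    by (rule quadratic_form_eq_sum[symmetric]) (use v in auto)
  finally show "0 \<le> conjugate v \<bullet> (reindex_mat N \<sigma> M *\<^sub>v v)" .
qed

lemma lin_map_reindex_mat:
  assumes "\<sigma> ` {..<N} \<subseteq> {..<N}"
  shows "lin_map N N (reindex_mat N \<sigma>)"
proof -
  have "\<sigma> i < N" if "i < N" for i using assms that by auto
  then show ?thesis unfolding lin_map_def reindex_mat_def by (auto intro!: eq_matI)
qed

lemma trace_reindex_mat:
  assumes bij: "bij_betw \<sigma> {..<N} {..<N}" and "M \<in> carrier_mat N N"
  shows "trace (reindex_mat N \<sigma> M) = trace M"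
proof -
  have "trace (reindex_mat N \<sigma> M) = (\<Sum>r<N. M $$ (\<sigma> r, \<sigma> r))"
    by (simp add: trace_def reindex_mat_def)
  also have "\<dots> = (\<Sum>r<N. M $$ (r, r))" by (rule sum.reindex_bij_betw[OF bij])
  finally show ?thesis using assms(2) by (simp add: trace_def)
qed

lemma ampl_carrier_mat[simp]: "ampl k din dout \<Phi> M \<in> carrier_mat (k*dout) (k*dout)"
  by (simp add: ampl_def)

lemma dim_ampl[simp]: "dim_row (ampl k din dout \<Phi> M) = k*dout" "dim_col (ampl k din dout \<Phi> M) = k*dout"
  by (simp_all add: ampl_def)

lemma ampl_reindex_mat:
  assumes "\<sigma> ` {..<N} \<subseteq> {..<N}"
  shows "ampl k N N (reindex_mat N \<sigma>) M = reindex_mat (k*N) (\<lambda>r. (r div N)*N + \<sigma> (r mod N)) M"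
proof (rule eq_mat_carrierI[OF ampl_carrier_mat reindex_mat_carrier_mat])
  fix r c assume "r < k*N" "c < k*N"
  moreover from this have "r mod N < N" "c mod N < N" "\<sigma> (r mod N) < N" "\<sigma> (c mod N) < N"
    using assms mod_less_of_less_mult by blast+
  ultimately show "ampl k N N (reindex_mat N \<sigma>) M $$ (r,c) =
      reindex_mat (k*N) (\<lambda>r. (r div N)*N + \<sigma> (r mod N)) M $$ (r,c)"
    by (simp add: ampl_def reindex_mat_def)
qed

lemma bij_betw_blockwise:
  fixes \<sigma> :: "nat \<Rightarrow> nat"
  assumes bij: "bij_betw \<sigma> {..<N} {..<N}"
  shows "bij_betw (\<lambda>r. (r div N)*N + \<sigma> (r mod N)) {..<k*N} {..<k*N}"
proof -
  let ?\<rho> = "\<lambda>r. (r div N)*N + \<sigma> (r mod N)"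
  have \<sigma>_less: "\<sigma> r < N" if "r < N" for r using bij that by (auto dest: bij_betwE)
  have "?\<rho> r < k*N" if "r < k*N" for r
    using that \<sigma>_less[OF mod_less_of_less_mult[OF that]]
    by (intro mult_index_less div_less_of_less_mult)
  then have "?\<rho> ` {..<k*N} \<subseteq> {..<k*N}" by auto
  moreover have "inj_on ?\<rho> {..<k*N}"
  proof (rule inj_onI)
    fix r s assume "r \<in> {..<k*N}" "s \<in> {..<k*N}" and eq: "?\<rho> r = ?\<rho> s"
    then have rs: "r mod N < N" "s mod N < N" by (auto simp: mod_less_of_less_mult)
    then have "r div N = s div N" "\<sigma> (r mod N) = \<sigma> (s mod N)"
      using arg_cong[OF eq, of "\<lambda>x. x div N"] arg_cong[OF eq, of "\<lambda>x. x mod N"] \<sigma>_less by auto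
    moreover have "r mod N = s mod N"
      using bij rs \<open>\<sigma> (r mod N) = \<sigma> (s mod N)\<close> by (auto simp: bij_betw_def dest: inj_onD)
    ultimately show "r = s" by (metis div_mult_mod_eq)
  qed
  ultimately show ?thesis by (simp add: bij_betw_def endo_inj_surj)
qed

lemma channel_reindex_mat:
  assumes bij: "bij_betw \<sigma> {..<N} {..<N}"
  shows "channel N N (reindex_mat N \<sigma>)"
  unfolding channel_def
proof (intro conjI)
  have into: "\<sigma> ` {..<N} \<subseteq> {..<N}" using bij by (simp add: bij_betw_def)
  show "lin_map N N (reindex_mat N \<sigma>)" using lin_map_reindex_mat[OF into] .
  show "trace_pres N (reindex_mat N \<sigma>)" unfolding trace_pres_def using trace_reindex_mat[OF bij] by blast
  show "compl_pos N N (reindex_mat N \<sigma>)" unfolding compl_pos_def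
    by (simp add: ampl_reindex_mat[OF into] psd_reindex_mat[OF bij_betw_blockwise[OF bij]])
qed

lemma lin_map_ampl:
  assumes "lin_map din dout \<Phi>"
  shows "lin_map (k*din) (k*dout) (ampl k din dout \<Phi>)"
proof -
  define block :: "nat \<Rightarrow> nat \<Rightarrow> complex mat \<Rightarrow> complex mat"
    where "block r c M = mat din din (\<lambda>(i,j). M $$ ((r div dout)*din + i, (c div dout)*din + j))"
    for r c M
  have ampl_eq: "ampl k din dout \<Phi> M $$ (r,c) = \<Phi> (block r c M) $$ (r mod dout, c mod dout)"
    if "r < k*dout" "c < k*dout" for M r c
    using that by (simp add: ampl_def block_def)
  have block_carrier: "block r c M \<in> carrier_mat din din" for r c M
    by (simp add: block_def)
  have \<Phi>_block: "\<Phi> (block r c M) \<in> carrier_mat dout dout" for r c M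
    using lin_mapD(1)[OF assms block_carrier] .
  then have \<Phi>_block_dim: "dim_row (\<Phi> (block r c M)) = dout" "dim_col (\<Phi> (block r c M)) = dout" for r c M
    by auto
  have "block r c (M + N) = block r c M + block r c N" "block r c (x \<cdot>\<^sub>m M) = x \<cdot>\<^sub>m block r c M"
    if "M \<in> carrier_mat (k*din) (k*din)" "N \<in> carrier_mat (k*din) (k*din)" "r < k*dout" "c < k*dout"
    for M N r c x
    using that by (auto intro!: eq_matI simp: block_def mult_index_less div_less_of_less_mult)
  then show ?thesis
    unfolding lin_map_def
    using \<Phi>_block lin_mapD(2)[OF assms block_carrier block_carrier] lin_mapD(3)[OF assms block_carrier]
    by (auto intro!: eq_mat_carrierI[of _ "k*dout"] simp: ampl_eq \<Phi>_block_dim mod_less_of_less_mult)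
qed

lemma ampl_comp:
  assumes "lin_map a b F"
  shows "ampl k a c (\<lambda>M. G (F M)) M = ampl k b c G (ampl k a b F M)"
proof (rule eq_mat_carrierI[OF ampl_carrier_mat ampl_carrier_mat])
  fix r s assume rs: "r < k*c" "s < k*c"
  let ?block = "mat a a (\<lambda>(i,j). M $$ ((r div c)*a + i, (s div c)*a + j))"
  have "F ?block \<in> carrier_mat b b" using lin_mapD(1)[OF assms] by simp
  moreover have "r div c < k" "s div c < k" using rs by (simp_all add: div_less_of_less_mult)
  ultimately have "mat b b (\<lambda>(i,j). ampl k a b F M $$ ((r div c)*b + i, (s div c)*b + j)) = F ?block"
    by (intro eq_mat_carrierI[of _ b]) (auto simp: ampl_def mult_index_less)
  with rs show "ampl k a c (\<lambda>M. G (F M)) M $$ (r,s) = ampl k b c G (ampl k a b F M) $$ (r,s)"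
    by (simp add: ampl_def)
qed

lemma trace_ampl:
  assumes "lin_map a b F" "trace_pres a F" "M \<in> carrier_mat (k*a) (k*a)"
  shows "trace (ampl k a b F M) = trace M"
proof -
  let ?block = "\<lambda>x. mat a a (\<lambda>(i,j). M $$ (x*a + i, x*a + j))"
  have "trace (ampl k a b F M) = (\<Sum>x<k. \<Sum>y<b. F (?block x) $$ (y,y))"
    by (simp add: trace_def ampl_def sum_lessThan_mult)
  also have "\<dots> = (\<Sum>x<k. trace (?block x))"
  proof (rule sum.cong[OF refl])
    fix x
    have "F (?block x) \<in> carrier_mat b b" using lin_mapD(1)[OF assms(1)] by simp
    then have "(\<Sum>y<b. F (?block x) $$ (y,y)) = trace (F (?block x))" by (simp add: trace_def)
    also have "\<dots> = trace (?block x)" using assms(2) by (simp add: trace_pres_def)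
    finally show "(\<Sum>y<b. F (?block x) $$ (y,y)) = trace (?block x)" .
  qed
  also have "\<dots> = trace M" using assms(3) by (simp add: trace_def sum_lessThan_mult)
  finally show ?thesis .
qed

lemma block_index_nested:
  assumes "r < k*(m*(b::nat))"
  shows "(r div (m*b))*(m*a) + ((r mod (m*b)) div b)*a = (r div b)*a"
    and "(r mod (m*b)) mod b = r mod b"
proof -
  have "b > 0" using assms by (auto intro!: gr0I)
  then have "r mod (m*b) div b = r div b mod m"
    by (simp add: mod_mult2_eq mult.commute)
  moreover have "r div (m*b) = r div b div m" by (simp add: div_mult2_eq mult.commute)
  ultimately have "r div b = (r div (m*b))*m + (r mod (m*b)) div b" by simp
  then show "(r div (m*b))*(m*a) + ((r mod (m*b)) div b)*a = (r div b)*a" by (simp add: algebra_simps)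
  show "(r mod (m*b)) mod b = r mod b" by (simp add: mod_mod_cancel)
qed

lemma ampl_ampl: "ampl k (m*a) (m*b) (ampl m a b F) M = ampl (k*m) a b F M"
proof (rule eq_matI)
  fix r c assume "r < dim_row (ampl (k*m) a b F M)" "c < dim_col (ampl (k*m) a b F M)"
  then have rc: "r < k*(m*b)" "c < k*(m*b)" by (auto simp: ampl_def mult.assoc)
  then have lt: "r mod (m*b) < m*b" "c mod (m*b) < m*b" by (auto simp: mod_less_of_less_mult)
  then have "r mod (m*b) div b < m" "c mod (m*b) div b < m" by (auto simp: div_less_of_less_mult)
  note block = block_index_nested(1)[OF rc(1), of a] block_index_nested(1)[OF rc(2), of a]
    block_index_nested(2)[OF rc(1)] block_index_nested(2)[OF rc(2)]
  have "mat a a (\<lambda>(i,j). mat (m*a) (m*a) (\<lambda>(i,j). M $$ ((r div (m*b))*(m*a) + i, (c div (m*b))*(m*a) + j))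
        $$ ((r mod (m*b) div b)*a + i, (c mod (m*b) div b)*a + j))
      = mat a a (\<lambda>(i,j). M $$ ((r div b)*a + i, (c div b)*a + j))"
    by (rule eq_matI) (use \<open>r mod (m*b) div b < m\<close> \<open>c mod (m*b) div b < m\<close> block in
        \<open>auto simp: mult_index_less add.assoc[symmetric]\<close>)
  with rc lt block show "ampl k (m*a) (m*b) (ampl m a b F) M $$ (r,c) = ampl (k*m) a b F M $$ (r,c)"
    by (simp add: ampl_def mult.assoc)
qed (auto simp: ampl_def mult.assoc)

lemma ampl_kron:
  assumes "lin_map a b F" "B \<in> carrier_mat k k" "A \<in> carrier_mat a a"
  shows "ampl k a b F (kron B A) = kron B (F A)"
proof -
  have FA: "F A \<in> carrier_mat b b" using lin_mapD(1)[OF assms(1) assms(3)] .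
  show ?thesis
  proof (rule eq_mat_carrierI[OF ampl_carrier_mat kron_carrier_mat[OF assms(2) FA]])
    fix r c assume rc: "r < k*b" "c < k*b"
    have "mat a a (\<lambda>(i,j). kron B A $$ ((r div b)*a + i, (c div b)*a + j)) = B $$ (r div b, c div b) \<cdot>\<^sub>m A"
      using rc assms by (intro eq_matI) (auto simp: div_less_of_less_mult)
    then show "ampl k a b F (kron B A) $$ (r,c) = kron B (F A) $$ (r,c)"
      using rc FA assms lin_mapD(3)[OF assms(1) assms(3)]
      by (simp add: ampl_def index_kron mod_less_of_less_mult)
  qed
qed

lemma ampl_cong:
  "(\<And>M. M \<in> carrier_mat din din \<Longrightarrow> F M = G M) \<Longrightarrow> ampl k din dout F M = ampl k din dout G M"
  unfolding ampl_def by simp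

lemma channel_cong:
  assumes "channel a b F" "\<And>M. M \<in> carrier_mat a a \<Longrightarrow> F M = G M"
  shows "channel a b G"
  using assms unfolding channel_def lin_map_def trace_pres_def compl_pos_def
  by (simp add: ampl_cong[of a F G])

lemma channel_comp:
  assumes "channel a b F" "channel b c G"
  shows "channel a c (\<lambda>M. G (F M))"
  unfolding channel_def
proof (intro conjI)
  have lF: "lin_map a b F" and lG: "lin_map b c G" using assms by (auto simp: channel_def)
  show "lin_map a c (\<lambda>M. G (F M))" using lin_map_comp[OF lF lG] .
  show "trace_pres a (\<lambda>M. G (F M))" using assms lin_mapD(1)[OF lF]
    by (auto simp: channel_def trace_pres_def)
  show "compl_pos a c (\<lambda>M. G (F M))" using assms
    by (auto simp: channel_def compl_pos_def ampl_comp[OF lF])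
qed

lemma channel_ampl:
  assumes "channel a b F"
  shows "channel (m*a) (m*b) (ampl m a b F)"
  unfolding channel_def
proof (intro conjI)
  have lF: "lin_map a b F" using assms by (auto simp: channel_def)
  show "lin_map (m*a) (m*b) (ampl m a b F)" using lin_map_ampl[OF lF] .
  show "trace_pres (m*a) (ampl m a b F)" using assms trace_ampl[OF lF]
    by (auto simp: channel_def trace_pres_def)
  show "compl_pos (m*a) (m*b) (ampl m a b F)"
    using assms by (auto simp: channel_def compl_pos_def ampl_ampl mult.assoc[symmetric])
qed

definition kron_swap_index :: "nat \<Rightarrow> nat \<Rightarrow> nat \<Rightarrow> nat" where
  "kron_swap_index d1 d2 r = (r mod d1)*d2 + r div d1"

lemma bij_betw_kron_swap_index: "bij_betw (kron_swap_index d1 d2) {..<d1*d2} {..<d1*d2}"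
proof -
  have "kron_swap_index d1 d2 r < d1*d2" if "r < d1*d2" for r
  proof -
    from that have "r < d2*d1" by (simp add: mult.commute)
    then show ?thesis unfolding kron_swap_index_def
      by (intro mult_index_less div_less_of_less_mult mod_less_of_less_mult)
  qed
  then have "kron_swap_index d1 d2 ` {..<d1*d2} \<subseteq> {..<d1*d2}" by auto
  moreover have "inj_on (kron_swap_index d1 d2) {..<d1*d2}"
  proof (rule inj_onI)
    fix r s assume "r \<in> {..<d1*d2}" "s \<in> {..<d1*d2}" and eq: "kron_swap_index d1 d2 r = kron_swap_index d1 d2 s"
    then have "r div d1 < d2" "s div d1 < d2"
      by (auto simp: div_less_of_less_mult mult.commute[of d1 d2])
    then have "r div d1 = s div d1" "r mod d1 = s mod d1"
      using arg_cong[OF eq, of "\<lambda>x. x mod d2"] arg_cong[OF eq, of "\<lambda>x. x div d2"]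
      by (simp_all add: kron_swap_index_def)
    then show "r = s" by (metis div_mult_mod_eq)
  qed
  ultimately show ?thesis by (simp add: bij_betw_def endo_inj_surj)
qed

lemma reindex_mat_kron_swap:
  assumes "A \<in> carrier_mat d1 d1" "B \<in> carrier_mat d2 d2"
  shows "reindex_mat (d1*d2) (kron_swap_index d1 d2) (kron A B) = kron B A"
proof (rule eq_matI)
  fix r c assume "r < dim_row (kron B A)" "c < dim_col (kron B A)"
  then have rc: "r < d2*d1" "c < d2*d1" using assms by auto
  have "reindex_mat (d1*d2) (kron_swap_index d1 d2) (kron A B) $$ (r,c) =
      kron A B $$ ((r mod d1)*d2 + r div d1, (c mod d1)*d2 + c div d1)"
    using rc by (simp add: reindex_mat_def kron_swap_index_def mult.commute)
  also have "\<dots> = kron B A $$ (r,c)"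
    using rc assms by (simp add: index_kron mod_less_of_less_mult div_less_of_less_mult)
  finally show "reindex_mat (d1*d2) (kron_swap_index d1 d2) (kron A B) $$ (r,c) = kron B A $$ (r,c)" .
qed (use assms in \<open>auto simp: mult.commute\<close>)

lemma map_tensor_id_eq_ampl:
  assumes "lin_map dX dA \<Phi>" "M \<in> carrier_mat (dX*m) (dX*m)"
  shows "map_tensor dX m dA m \<Phi> (\<lambda>N. N) M =
    reindex_mat (m*dA) (kron_swap_index m dA) (ampl m dX dA \<Phi> (reindex_mat (dX*m) (kron_swap_index dX m) M))"
proof (rule lin_map_eqI_kron[OF _ _ _ assms(2)])
  show "lin_map (dX*m) (dA*m) (map_tensor dX m dA m \<Phi> (\<lambda>N. N))" by (rule lin_map_map_tensor)
  have "lin_map (dX*m) (m*dX) (reindex_mat (dX*m) (kron_swap_index dX m))"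
    using channel_reindex_mat[OF bij_betw_kron_swap_index[of dX m]]
    by (simp add: channel_def mult.commute[of m dX])
  moreover have "lin_map (m*dX) (m*dA) (ampl m dX dA \<Phi>)" by (rule lin_map_ampl[OF assms(1)])
  moreover have "lin_map (m*dA) (dA*m) (reindex_mat (m*dA) (kron_swap_index m dA))"
    using channel_reindex_mat[OF bij_betw_kron_swap_index[of m dA]]
    by (simp add: channel_def mult.commute[of dA m])
  ultimately show "lin_map (dX*m) (dA*m)
      (\<lambda>M. reindex_mat (m*dA) (kron_swap_index m dA) (ampl m dX dA \<Phi> (reindex_mat (dX*m) (kron_swap_index dX m) M)))"
    by (rule lin_map_comp[OF lin_map_comp])
  fix i j k l
  have \<Phi>e: "\<Phi> (emat dX i j) \<in> carrier_mat dA dA" using lin_mapD(1)[OF assms(1)] by simp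
  have "reindex_mat (dX*m) (kron_swap_index dX m) (kron (emat dX i j) (emat m k l)) = kron (emat m k l) (emat dX i j)"
    by (rule reindex_mat_kron_swap) simp_all
  moreover have "ampl m dX dA \<Phi> (kron (emat m k l) (emat dX i j)) = kron (emat m k l) (\<Phi> (emat dX i j))"
    by (rule ampl_kron[OF assms(1)]) simp_all
  moreover have "reindex_mat (m*dA) (kron_swap_index m dA) (kron (emat m k l) (\<Phi> (emat dX i j))) =
      kron (\<Phi> (emat dX i j)) (emat m k l)"
    by (rule reindex_mat_kron_swap[OF _ \<Phi>e]) simp
  moreover have "map_tensor dX m dA m \<Phi> (\<lambda>N. N) (kron (emat dX i j) (emat m k l)) = kron (\<Phi> (emat dX i j)) (emat m k l)"
    by (rule map_tensor_kron[OF assms(1) lin_map_id]) simp_all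
  ultimately show "map_tensor dX m dA m \<Phi> (\<lambda>N. N) (kron (emat dX i j) (emat m k l)) =
      reindex_mat (m*dA) (kron_swap_index m dA) (ampl m dX dA \<Phi>
        (reindex_mat (dX*m) (kron_swap_index dX m) (kron (emat dX i j) (emat m k l))))"
    by simp
qed

lemma channel_map_tensor_id:
  assumes "channel dX dA \<Phi>"
  shows "channel (dX*m) (dA*m) (map_tensor dX m dA m \<Phi> (\<lambda>N. N))"
proof -
  have c1: "channel (dX*m) (m*dX) (reindex_mat (dX*m) (kron_swap_index dX m))"
    using channel_reindex_mat[OF bij_betw_kron_swap_index[of dX m]] by (simp add: mult.commute[of m dX])
  have c2: "channel (m*dX) (m*dA) (ampl m dX dA \<Phi>)" by (rule channel_ampl[OF assms])
  have c3: "channel (m*dA) (dA*m) (reindex_mat (m*dA) (kron_swap_index m dA))"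
    using channel_reindex_mat[OF bij_betw_kron_swap_index[of m dA]] by (simp add: mult.commute[of dA m])
  have "lin_map dX dA \<Phi>" using assms by (simp add: channel_def)
  then show ?thesis
    by (intro channel_cong[OF channel_comp[OF channel_comp[OF c1 c2] c3]])
      (simp add: map_tensor_id_eq_ampl)
qed

section \<open>LOSR-free transformations\<close>

text \<open>\<open>R \<otimes> id\<close> on \<open>(X \<otimes> M\<^sub>A) \<otimes> (Y \<otimes> M\<^sub>B)\<close>, with the tensor factors grouped by party on
  both sides, so that the output lives on \<open>(A \<otimes> M\<^sub>A) \<otimes> (B \<otimes> M\<^sub>B)\<close>.\<close>

definition with_memory :: "nat \<Rightarrow> nat \<Rightarrow> nat \<Rightarrow> nat \<Rightarrow> nat \<Rightarrow> nat \<Rightarrow> cmap \<Rightarrow> cmap" where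
  "with_memory dX dY dA dB mA mB R M =
     swap_mid dA dB mA mB (map_tensor (dX*dY) (mA*mB) (dA*dB) (mA*mB) R (\<lambda>N. N) (swap_mid dX mA dY mB M))"

lemma lin_map_with_memory:
  "lin_map (dX*mA*(dY*mB)) (dA*mA*(dB*mB)) (with_memory dX dY dA dB mA mB R)"
  unfolding with_memory_def[abs_def]
  by (intro lin_map_comp[OF lin_map_comp[OF lin_map_swap_mid lin_map_map_tensor] lin_map_swap_mid])

lemma with_memory_kron:
  assumes "lin_map dX dA RA" "lin_map dY dB RB"
    and "A \<in> carrier_mat dX dX" "B \<in> carrier_mat dY dY" "C \<in> carrier_mat mA mA" "D \<in> carrier_mat mB mB"
  shows "with_memory dX dY dA dB mA mB (map_tensor dX dY dA dB RA RB) (kron (kron A C) (kron B D)) =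
    kron (kron (RA A) C) (kron (RB B) D)"
proof -
  have RA: "RA A \<in> carrier_mat dA dA" and RB: "RB B \<in> carrier_mat dB dB"
    using assms lin_mapD(1) by blast+
  have "map_tensor (dX*dY) (mA*mB) (dA*dB) (mA*mB) (map_tensor dX dY dA dB RA RB) (\<lambda>N. N)
      (kron (kron A B) (kron C D)) = kron (kron (RA A) (RB B)) (kron C D)"
    using assms by (simp add: map_tensor_kron[OF lin_map_map_tensor lin_map_id] map_tensor_kron[OF assms(1-4)])
  then show ?thesis
    unfolding with_memory_def using assms RA RB by (simp add: swap_mid_kron)
qed

lemma with_memory_map_tensor:
  assumes "lin_map dX dA RA" "lin_map dY dB RB" "M \<in> carrier_mat (dX*mA*(dY*mB)) (dX*mA*(dY*mB))"
  shows "with_memory dX dY dA dB mA mB (map_tensor dX dY dA dB RA RB) M =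
    map_tensor (dX*mA) (dY*mB) (dA*mA) (dB*mB) (map_tensor dX mA dA mA RA (\<lambda>N. N))
      (map_tensor dY mB dB mB RB (\<lambda>N. N)) M"
proof (rule lin_map_eqI_kron[OF lin_map_with_memory lin_map_map_tensor _ assms(3)])
  fix i j k l assume "i < dX*mA" "j < dX*mA" "k < dY*mB" "l < dY*mB"
  then show "with_memory dX dY dA dB mA mB (map_tensor dX dY dA dB RA RB) (kron (emat (dX*mA) i j) (emat (dY*mB) k l)) =
      map_tensor (dX*mA) (dY*mB) (dA*mA) (dB*mB) (map_tensor dX mA dA mA RA (\<lambda>N. N))
        (map_tensor dY mB dB mB RB (\<lambda>N. N)) (kron (emat (dX*mA) i j) (emat (dY*mB) k l))"
    using assms(1,2)
    by (simp add: emat_mult_eq_kron with_memory_kron map_tensor_kron lin_map_map_tensor lin_map_id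
        lin_mapD(1)[OF assms(1)] lin_mapD(1)[OF assms(2)])
qed

lemma with_memory_msum:
  assumes "\<And>M. M \<in> carrier_mat (dX*dY) (dX*dY) \<Longrightarrow> R M = msum n (dA*dB) (\<lambda>i. q i \<cdot>\<^sub>m F i M)"
    and "\<And>i M. M \<in> carrier_mat (dX*dY) (dX*dY) \<Longrightarrow> F i M \<in> carrier_mat (dA*dB) (dA*dB)"
  shows "with_memory dX dY dA dB mA mB R X =
    msum n (dA*mA*(dB*mB)) (\<lambda>i. q i \<cdot>\<^sub>m with_memory dX dY dA dB mA mB (F i) X)"
proof -
  have "map_tensor (dX*dY) (mA*mB) (dA*dB) (mA*mB) R (\<lambda>N. N) (swap_mid dX mA dY mB X) =
      msum n (dA*dB*(mA*mB)) (\<lambda>i. q i \<cdot>\<^sub>m map_tensor (dX*dY) (mA*mB) (dA*dB) (mA*mB) (F i) (\<lambda>N. N)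
        (swap_mid dX mA dY mB X))"
    by (rule map_tensor_msum_left) (use assms in auto)
  then show ?thesis
    unfolding with_memory_def by (simp add: lin_map_msum[OF lin_map_swap_mid])
qed

definition local_supermap :: "sys \<Rightarrow> sys \<Rightarrow> sys \<Rightarrow> sys \<Rightarrow> nat \<Rightarrow> cmap \<Rightarrow> cmap \<Rightarrow> bool" where
  "local_supermap X A X' A' m P E \<longleftrightarrow>
     channel (dm X') (dm X*m) P \<and> (is_cl X' \<longrightarrow> cl_input (dm X') (dm X*m) P) \<and>
     channel (dm A*m) (dm A') E \<and> (is_cl A' \<longrightarrow> cl_output (dm A*m) (dm A') E)"

definition apply_supermap :: "nat \<Rightarrow> nat \<Rightarrow> nat \<Rightarrow> cmap \<Rightarrow> cmap \<Rightarrow> cmap \<Rightarrow> cmap" where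
  "apply_supermap dX dA m P E \<Phi> \<rho> = E (map_tensor dX m dA m \<Phi> (\<lambda>N. N) (P \<rho>))"

lemma local_chan_apply_supermap:
  assumes "valid_sys X'" "valid_sys A'" "local_chan X A \<Phi>" "local_supermap X A X' A' m P E"
  shows "local_chan X' A' (apply_supermap (dm X) (dm A) m P E \<Phi>)"
proof -
  have P: "channel (dm X') (dm X*m) P" and E: "channel (dm A*m) (dm A') E"
    using assms(4) by (simp_all add: local_supermap_def)
  have lin_P: "lin_map (dm X') (dm X*m) P" and lin_E: "lin_map (dm A*m) (dm A') E"
    using P E by (simp_all add: channel_def)
  have lin_\<Phi>_id: "lin_map (dm X*m) (dm A*m) (map_tensor (dm X) m (dm A) m \<Phi> (\<lambda>N. N))"
    by (rule lin_map_map_tensor)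
  have "channel (dm X) (dm A) \<Phi>" using assms(3) by (simp add: local_chan_def)
  then have "channel (dm X') (dm A') (apply_supermap (dm X) (dm A) m P E \<Phi>)"
    unfolding apply_supermap_def[abs_def]
    by (intro channel_comp[OF channel_comp[OF P] E] channel_map_tensor_id)
  moreover have "cl_input (dm X') (dm A') (apply_supermap (dm X) (dm A) m P E \<Phi>)" if "is_cl X'"
    using assms(4) that
    by (simp add: local_supermap_def cl_input_def apply_supermap_def lin_map_zero[OF lin_\<Phi>_id]
        lin_map_zero[OF lin_E])
  moreover have "cl_output (dm X') (dm A') (apply_supermap (dm X) (dm A) m P E \<Phi>)" if "is_cl A'"
    using assms(4) that lin_mapD(1)[OF lin_\<Phi>_id lin_mapD(1)[OF lin_P]]
    unfolding local_supermap_def cl_output_def apply_supermap_def by blast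
  ultimately show ?thesis
    using assms(1,2) by (simp add: local_chan_def)
qed

definition losr_branch :: "btype \<Rightarrow> btype \<Rightarrow> nat \<Rightarrow> nat \<Rightarrow> cmap \<Rightarrow> cmap \<Rightarrow> cmap \<Rightarrow> cmap \<Rightarrow> cmap \<Rightarrow> cmap" where
  "losr_branch T T' mA mB PA PB EA EB R M =
     map_tensor (dm (outA T)*mA) (dm (outB T)*mB) (dm (outA T')) (dm (outB T')) EA EB
       (with_memory (dm (inX T)) (dm (inY T)) (dm (outA T)) (dm (outB T)) mA mB R
         (map_tensor (dm (inX T')) (dm (inY T')) (dm (inX T)*mA) (dm (inY T)*mB) PA PB M))"

lemma losr_branch_carrier_mat[simp]:
  "losr_branch T T' mA mB PA PB EA EB R M \<in> carrier_mat (dm (outA T')*dm (outB T')) (dm (outA T')*dm (outB T'))"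
  by (simp add: losr_branch_def)

lemma losr_transE:
  assumes "losr_trans T T' \<tau>"
  obtains n p mA mB PA PB EA EB where
    "valid_sys (inX T')" "valid_sys (outA T')" "valid_sys (inY T')" "valid_sys (outB T')"
    "\<forall>l<n. p l \<ge> 0" "(\<Sum>l<n. p l) = 1"
    "\<And>l. l < n \<Longrightarrow> local_supermap (inX T) (outA T) (inX T') (outA T') mA (PA l) (EA l)"
    "\<And>l. l < n \<Longrightarrow> local_supermap (inY T) (outB T) (inY T') (outB T') mB (PB l) (EB l)"
    "\<And>R M. M \<in> carrier_mat (dm (inX T')*dm (inY T')) (dm (inX T')*dm (inY T')) \<Longrightarrow>
       \<tau> R M = msum n (dm (outA T')*dm (outB T'))
         (\<lambda>l. complex_of_real (p l) \<cdot>\<^sub>m losr_branch T T' mA mB (PA l) (PB l) (EA l) (EB l) R M)"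
  using assms unfolding losr_trans_def Let_def local_supermap_def losr_branch_def with_memory_def
  by blast

lemma losr_branch_map_tensor:
  assumes "lin_map (dm (inX T)) (dm (outA T)) RA" "lin_map (dm (inY T)) (dm (outB T)) RB"
    and "local_supermap (inX T) (outA T) (inX T') (outA T') mA PA EA"
    and "local_supermap (inY T) (outB T) (inY T') (outB T') mB PB EB"
    and "M \<in> carrier_mat (dm (inX T')*dm (inY T')) (dm (inX T')*dm (inY T'))"
  shows "losr_branch T T' mA mB PA PB EA EB (map_tensor (dm (inX T)) (dm (inY T)) (dm (outA T)) (dm (outB T)) RA RB) M =
    map_tensor (dm (inX T')) (dm (inY T')) (dm (outA T')) (dm (outB T'))
      (apply_supermap (dm (inX T)) (dm (outA T)) mA PA EA RA)
      (apply_supermap (dm (inY T)) (dm (outB T)) mB PB EB RB) M"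
proof -
  have "lin_map (dm (inX T')) (dm (inX T)*mA) PA" "lin_map (dm (outA T)*mA) (dm (outA T')) EA"
    "lin_map (dm (inY T')) (dm (inY T)*mB) PB" "lin_map (dm (outB T)*mB) (dm (outB T')) EB"
    using assms(3,4) by (simp_all add: local_supermap_def channel_def)
  with assms show ?thesis
    unfolding losr_branch_def apply_supermap_def[abs_def]
    by (simp add: with_memory_map_tensor map_tensor_comp lin_map_map_tensor lin_map_comp)
qed

lemma losr_branch_msum:
  assumes "\<And>M. M \<in> carrier_mat (dm (inX T)*dm (inY T)) (dm (inX T)*dm (inY T)) \<Longrightarrow>
      R M = msum n (dm (outA T)*dm (outB T)) (\<lambda>i. q i \<cdot>\<^sub>m F i M)"
    and "\<And>i M. M \<in> carrier_mat (dm (inX T)*dm (inY T)) (dm (inX T)*dm (inY T)) \<Longrightarrow>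
      F i M \<in> carrier_mat (dm (outA T)*dm (outB T)) (dm (outA T)*dm (outB T))"
  shows "losr_branch T T' mA mB PA PB EA EB R M =
    msum n (dm (outA T')*dm (outB T')) (\<lambda>i. q i \<cdot>\<^sub>m losr_branch T T' mA mB PA PB EA EB (F i) M)"
  unfolding losr_branch_def
  by (simp add: with_memory_msum[OF assms] lin_map_msum[OF lin_map_map_tensor] lin_mapD(1)[OF lin_map_with_memory])

lemma losr_freeI:
  assumes "\<forall>i<n. p i \<ge> 0" "(\<Sum>i<n. p i) = 1"
    and "\<forall>i<n. local_chan (inX T) (outA T) (RA i) \<and> local_chan (inY T) (outB T) (RB i)"
    and "\<And>M. M \<in> carrier_mat (dm (inX T)*dm (inY T)) (dm (inX T)*dm (inY T)) \<Longrightarrow>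
      S M = msum n (dm (outA T)*dm (outB T)) (\<lambda>i. complex_of_real (p i) \<cdot>\<^sub>m
        map_tensor (dm (inX T)) (dm (inY T)) (dm (outA T)) (dm (outB T)) (RA i) (RB i) M)"
  shows "losr_free T S"
  using assms unfolding losr_free_def Let_def by blast

lemma losr_freeE:
  assumes "losr_free T S"
  obtains n p RA RB where "\<forall>i<n. p i \<ge> 0" "(\<Sum>i<n. p i) = 1"
    and "\<forall>i<n. local_chan (inX T) (outA T) (RA i) \<and> local_chan (inY T) (outB T) (RB i)"
    and "\<And>M. M \<in> carrier_mat (dm (inX T)*dm (inY T)) (dm (inX T)*dm (inY T)) \<Longrightarrow>
      S M = msum n (dm (outA T)*dm (outB T)) (\<lambda>i. complex_of_real (p i) \<cdot>\<^sub>m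
        map_tensor (dm (inX T)) (dm (inY T)) (dm (outA T)) (dm (outB T)) (RA i) (RB i) M)"
  using assms unfolding losr_free_def Let_def by blast

lemma losr_free_carrier_mat:
  "losr_free T S \<Longrightarrow> M \<in> carrier_mat (dm (inX T)*dm (inY T)) (dm (inX T)*dm (inY T)) \<Longrightarrow>
   S M \<in> carrier_mat (dm (outA T)*dm (outB T)) (dm (outA T)*dm (outB T))"
  by (elim losr_freeE) simp

lemma losr_free_cong:
  assumes "losr_free T F"
    and "\<And>M. M \<in> carrier_mat (dm (inX T)*dm (inY T)) (dm (inX T)*dm (inY T)) \<Longrightarrow> F M = G M"
  shows "losr_free T G"
  using assms(1)
proof (rule losr_freeE)
  fix n p RA RB
  assume "\<forall>i<n. p i \<ge> 0" "(\<Sum>i<n. p i) = 1"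
    "\<forall>i<n. local_chan (inX T) (outA T) (RA i) \<and> local_chan (inY T) (outB T) (RB i)"
    "\<And>M. M \<in> carrier_mat (dm (inX T)*dm (inY T)) (dm (inX T)*dm (inY T)) \<Longrightarrow>
      F M = msum n (dm (outA T)*dm (outB T)) (\<lambda>i. complex_of_real (p i) \<cdot>\<^sub>m
        map_tensor (dm (inX T)) (dm (inY T)) (dm (outA T)) (dm (outB T)) (RA i) (RB i) M)"
  then show ?thesis
    by (intro losr_freeI[of n p]) (simp_all add: assms(2)[symmetric])
qed

lemma losr_branch_convex_product:
  assumes "\<And>M. M \<in> carrier_mat (dm (inX T)*dm (inY T)) (dm (inX T)*dm (inY T)) \<Longrightarrow>
      S M = msum n (dm (outA T)*dm (outB T)) (\<lambda>i. q i \<cdot>\<^sub>m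
        map_tensor (dm (inX T)) (dm (inY T)) (dm (outA T)) (dm (outB T)) (RA i) (RB i) M)"
    and "\<And>i. i < n \<Longrightarrow> lin_map (dm (inX T)) (dm (outA T)) (RA i)"
    and "\<And>i. i < n \<Longrightarrow> lin_map (dm (inY T)) (dm (outB T)) (RB i)"
    and "local_supermap (inX T) (outA T) (inX T') (outA T') mA PA EA"
    and "local_supermap (inY T) (outB T) (inY T') (outB T') mB PB EB"
    and "M \<in> carrier_mat (dm (inX T')*dm (inY T')) (dm (inX T')*dm (inY T'))"
  shows "losr_branch T T' mA mB PA PB EA EB S M =
    msum n (dm (outA T')*dm (outB T')) (\<lambda>i. q i \<cdot>\<^sub>m
      map_tensor (dm (inX T')) (dm (inY T')) (dm (outA T')) (dm (outB T'))
        (apply_supermap (dm (inX T)) (dm (outA T)) mA PA EA (RA i))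
        (apply_supermap (dm (inY T)) (dm (outB T)) mB PB EB (RB i)) M)"
proof -
  have "losr_branch T T' mA mB PA PB EA EB S M =
      msum n (dm (outA T')*dm (outB T')) (\<lambda>i. q i \<cdot>\<^sub>m
        losr_branch T T' mA mB PA PB EA EB
          (map_tensor (dm (inX T)) (dm (inY T)) (dm (outA T)) (dm (outB T)) (RA i) (RB i)) M)"
    by (rule losr_branch_msum[OF assms(1)]) simp_all
  also have "\<dots> = msum n (dm (outA T')*dm (outB T')) (\<lambda>i. q i \<cdot>\<^sub>m
      map_tensor (dm (inX T')) (dm (inY T')) (dm (outA T')) (dm (outB T'))
        (apply_supermap (dm (inX T)) (dm (outA T)) mA PA EA (RA i))
        (apply_supermap (dm (inY T)) (dm (outB T)) mB PB EB (RB i)) M)"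
    using assms(2-6) by (intro msum_cong arg_cong[where f="\<lambda>X. _ \<cdot>\<^sub>m X"] losr_branch_map_tensor)
  finally show ?thesis .
qed

lemma losr_free_image:
  assumes "losr_free T S" and "losr_trans T T' \<tau>"
  shows "losr_free T' (\<tau> S)"
proof -
  let ?dX' = "dm (inX T')" and ?dY' = "dm (inY T')" and ?dA' = "dm (outA T')" and ?dB' = "dm (outB T')"
  obtain n p RA RB where p: "\<forall>i<n. p i \<ge> 0" "(\<Sum>i<n. p i) = 1"
    and R: "\<forall>i<n. local_chan (inX T) (outA T) (RA i) \<and> local_chan (inY T) (outB T) (RB i)"
    and S: "\<And>M. M \<in> carrier_mat (dm (inX T)*dm (inY T)) (dm (inX T)*dm (inY T)) \<Longrightarrow>
      S M = msum n (dm (outA T)*dm (outB T)) (\<lambda>i. complex_of_real (p i) \<cdot>\<^sub>m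
        map_tensor (dm (inX T)) (dm (inY T)) (dm (outA T)) (dm (outB T)) (RA i) (RB i) M)"
    by (rule losr_freeE[OF assms(1)], rule that)
  obtain n' p' mA mB PA PB EA EB
    where valid: "valid_sys (inX T')" "valid_sys (outA T')" "valid_sys (inY T')" "valid_sys (outB T')"
      and p': "\<forall>l<n'. p' l \<ge> 0" "(\<Sum>l<n'. p' l) = 1"
      and sA: "\<And>l. l < n' \<Longrightarrow> local_supermap (inX T) (outA T) (inX T') (outA T') mA (PA l) (EA l)"
      and sB: "\<And>l. l < n' \<Longrightarrow> local_supermap (inY T) (outB T) (inY T') (outB T') mB (PB l) (EB l)"
      and \<tau>: "\<And>R M. M \<in> carrier_mat (?dX'*?dY') (?dX'*?dY') \<Longrightarrow>
        \<tau> R M = msum n' (?dA'*?dB') (\<lambda>l. complex_of_real (p' l) \<cdot>\<^sub>m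
          losr_branch T T' mA mB (PA l) (PB l) (EA l) (EB l) R M)"
    by (rule losr_transE[OF assms(2)], rule that)
  define CA where "CA k = apply_supermap (dm (inX T)) (dm (outA T)) mA (PA (k div n)) (EA (k div n)) (RA (k mod n))"
    for k
  define CB where "CB k = apply_supermap (dm (inY T)) (dm (outB T)) mB (PB (k div n)) (EB (k div n)) (RB (k mod n))"
    for k
  have lin_R: "lin_map (dm (inX T)) (dm (outA T)) (RA i)" "lin_map (dm (inY T)) (dm (outB T)) (RB i)"
    if "i < n" for i
    using R that by (simp_all add: local_chan_def channel_def)
  show ?thesis
  proof (rule losr_freeI)
    show "\<forall>k<n'*n. p' (k div n) * p (k mod n) \<ge> 0" "(\<Sum>k<n'*n. p' (k div n) * p (k mod n)) = 1"
      using product_weights[OF p' p] by blast+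
    show "\<forall>k<n'*n. local_chan (inX T') (outA T') (CA k) \<and> local_chan (inY T') (outB T') (CB k)"
    proof (intro allI impI conjI)
      fix k assume "k < n'*n"
      then have l: "k div n < n'" and i: "k mod n < n"
        by (simp_all add: div_less_of_less_mult mod_less_of_less_mult)
      show "local_chan (inX T') (outA T') (CA k)" unfolding CA_def
        using valid R i by (intro local_chan_apply_supermap sA[OF l]) auto
      show "local_chan (inY T') (outB T') (CB k)" unfolding CB_def
        using valid R i by (intro local_chan_apply_supermap sB[OF l]) auto
    qed
    fix M :: "complex mat" assume M: "M \<in> carrier_mat (?dX'*?dY') (?dX'*?dY')"
    have "\<tau> S M = msum n' (?dA'*?dB') (\<lambda>l. complex_of_real (p' l) \<cdot>\<^sub>m
        msum n (?dA'*?dB') (\<lambda>i. complex_of_real (p i) \<cdot>\<^sub>m map_tensor ?dX' ?dY' ?dA' ?dB'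
          (apply_supermap (dm (inX T)) (dm (outA T)) mA (PA l) (EA l) (RA i))
          (apply_supermap (dm (inY T)) (dm (outB T)) mB (PB l) (EB l) (RB i)) M))"
      unfolding \<tau>[OF M]
      by (intro msum_cong arg_cong[where f="\<lambda>X. _ \<cdot>\<^sub>m X"] losr_branch_convex_product[OF S] lin_R sA sB M)
    also have "\<dots> = msum (n'*n) (?dA'*?dB') (\<lambda>k. complex_of_real (p' (k div n) * p (k mod n)) \<cdot>\<^sub>m
        map_tensor ?dX' ?dY' ?dA' ?dB' (CA k) (CB k) M)"
      unfolding CA_def CB_def by (rule msum_msum) simp
    finally show "\<tau> S M = msum (n'*n) (?dA'*?dB') (\<lambda>k. complex_of_real (p' (k div n) * p (k mod n)) \<cdot>\<^sub>m
        map_tensor ?dX' ?dY' ?dA' ?dB' (CA k) (CB k) M)" .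
  qed
qed

lemma mix_eq_msum:
  assumes "R N \<in> carrier_mat d d" "S N \<in> carrier_mat d d"
  shows "mix s R S N = msum 2 d (\<lambda>i. (if i = 0 then complex_of_real (1/(1+s)) else complex_of_real (s/(1+s)))
    \<cdot>\<^sub>m (if i = 0 then R else S) N)"
  using assms by (intro eq_matI) (auto simp: mix_def eval_nat_numeral lessThan_Suc algebra_simps)

lemma losr_branch_mix:
  assumes "lin_map (dm (inX T)*dm (inY T)) (dm (outA T)*dm (outB T)) R"
    and "\<And>N. N \<in> carrier_mat (dm (inX T)*dm (inY T)) (dm (inX T)*dm (inY T)) \<Longrightarrow>
      S N \<in> carrier_mat (dm (outA T)*dm (outB T)) (dm (outA T)*dm (outB T))"
  shows "losr_branch T T' mA mB PA PB EA EB (mix s R S) M =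
    mix s (losr_branch T T' mA mB PA PB EA EB R) (losr_branch T T' mA mB PA PB EA EB S) M"
proof -
  have "losr_branch T T' mA mB PA PB EA EB (mix s R S) M =
      msum 2 (dm (outA T')*dm (outB T')) (\<lambda>i. (if i = 0 then complex_of_real (1/(1+s)) else complex_of_real (s/(1+s)))
        \<cdot>\<^sub>m losr_branch T T' mA mB PA PB EA EB (if i = 0 then R else S) M)"
    using assms lin_mapD(1)[OF assms(1)] by (intro losr_branch_msum mix_eq_msum) auto
  also have "\<dots> = mix s (losr_branch T T' mA mB PA PB EA EB R) (losr_branch T T' mA mB PA PB EA EB S) M"
    by (subst mix_eq_msum) (auto intro!: msum_cong)
  finally show ?thesis .
qed

lemma msum_mix:
  assumes "\<And>l N. F l N \<in> carrier_mat d d" "\<And>l N. G l N \<in> carrier_mat d d"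
  shows "msum n d (\<lambda>l. c l \<cdot>\<^sub>m mix s (F l) (G l) M) =
    mix s (\<lambda>N. msum n d (\<lambda>l. c l \<cdot>\<^sub>m F l N)) (\<lambda>N. msum n d (\<lambda>l. c l \<cdot>\<^sub>m G l N)) M"
proof (rule eq_matI)
  fix i j assume "i < dim_row (mix s (\<lambda>N. msum n d (\<lambda>l. c l \<cdot>\<^sub>m F l N)) (\<lambda>N. msum n d (\<lambda>l. c l \<cdot>\<^sub>m G l N)) M)"
    "j < dim_col (mix s (\<lambda>N. msum n d (\<lambda>l. c l \<cdot>\<^sub>m F l N)) (\<lambda>N. msum n d (\<lambda>l. c l \<cdot>\<^sub>m G l N)) M)"
  then have ij: "i < d" "j < d" by (simp_all add: mix_def)
  have dims: "dim_row (F l N) = d" "dim_col (F l N) = d" "dim_row (G l N) = d" "dim_col (G l N) = d" for l N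
    using assms[of l N] by auto
  show "msum n d (\<lambda>l. c l \<cdot>\<^sub>m mix s (F l) (G l) M) $$ (i,j) =
      mix s (\<lambda>N. msum n d (\<lambda>l. c l \<cdot>\<^sub>m F l N)) (\<lambda>N. msum n d (\<lambda>l. c l \<cdot>\<^sub>m G l N)) M $$ (i,j)"
    using ij by (simp add: mix_def dims sum_distrib_left sum.distrib algebra_simps)
qed (simp_all add: mix_def)

lemma losr_trans_mix:
  assumes "losr_trans T T' \<tau>"
    and "lin_map (dm (inX T)*dm (inY T)) (dm (outA T)*dm (outB T)) R"
    and "\<And>N. N \<in> carrier_mat (dm (inX T)*dm (inY T)) (dm (inX T)*dm (inY T)) \<Longrightarrow>
      S N \<in> carrier_mat (dm (outA T)*dm (outB T)) (dm (outA T)*dm (outB T))"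
    and "M \<in> carrier_mat (dm (inX T')*dm (inY T')) (dm (inX T')*dm (inY T'))"
  shows "\<tau> (mix s R S) M = mix s (\<tau> R) (\<tau> S) M"
proof -
  obtain n p mA mB PA PB EA EB where \<tau>: "\<And>R M. M \<in> carrier_mat (dm (inX T')*dm (inY T')) (dm (inX T')*dm (inY T')) \<Longrightarrow>
      \<tau> R M = msum n (dm (outA T')*dm (outB T'))
        (\<lambda>l. complex_of_real (p l) \<cdot>\<^sub>m losr_branch T T' mA mB (PA l) (PB l) (EA l) (EB l) R M)"
    by (rule losr_transE[OF assms(1)], rule that, assumption)
  have "\<tau> (mix s R S) M = msum n (dm (outA T')*dm (outB T')) (\<lambda>l. complex_of_real (p l) \<cdot>\<^sub>m
      mix s (losr_branch T T' mA mB (PA l) (PB l) (EA l) (EB l) R) (losr_branch T T' mA mB (PA l) (PB l) (EA l) (EB l) S) M)"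
    unfolding \<tau>[OF assms(4)] by (intro msum_cong) (simp add: losr_branch_mix[OF assms(2,3)])
  also have "\<dots> = mix s (\<tau> R) (\<tau> S) M"
    by (simp add: msum_mix) (simp add: mix_def \<tau>[OF assms(4)])
  finally show ?thesis .
qed

theorem mainTheorem4:
  fixes T T' :: btype and R :: cmap and \<tau> :: "cmap \<Rightarrow> cmap"
  assumes "resource T R"
    and "losr_trans T T' \<tau>"
  shows "M_abs T' (\<tau> R) \<le> M_abs T R"
proof -
  have lin_R: "lin_map (dm (inX T)*dm (inY T)) (dm (outA T)*dm (outB T)) R"
    using assms(1) unfolding resource_def Let_def by blast
  have "losr_free T' (\<tau> S) \<and> losr_free T' (mix s (\<tau> R) (\<tau> S))"
    if S: "losr_free T S" and mix: "losr_free T (mix s R S)" for s S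
  proof
    show "losr_free T' (\<tau> S)" by (rule losr_free_image[OF S assms(2)])
    have "losr_free T' (\<tau> (mix s R S))" by (rule losr_free_image[OF mix assms(2)])
    then show "losr_free T' (mix s (\<tau> R) (\<tau> S))"
      by (rule losr_free_cong) (rule losr_trans_mix[OF assms(2) lin_R losr_free_carrier_mat[OF S]])
  qed
  then show ?thesis
    unfolding M_abs_def by (intro Inf_superset_mono) blast
qed

end
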